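(* Let $R\subseteq\mathbb R$ be an archimedean real closed field, let $R(x,y)$ be the rational function field in two variables, and let $\xi$ be an $\mathbb R$-place of $R(x)$ with $\xi|_R=\mathrm{id}_R$; put $\overline F=\xi(R(x))\setminus\{\infty\}$. Let $\xi_y$ be the constant extension of $\xi$ to $R(x)(y)=R(x,y)$ and for $\zeta\in M(R(y))$ let $\zeta_{\overline F}$ be the constant extension of $\zeta$ to $\overline F(y)$. Then the map $\iota:M(R(y))\to M(R(x,y))$, $\iota(\zeta)=\zeta_{\overline F}\circ\xi_y$, is the unique continuous injective map $M(R(y))\to M(R(x,y))$ which is compatible with restriction and such that every place in its image restricts to $\xi$ on $R(x)$.
   Context: For a field $K$, $M(K)$ is the set of $\mathbb R$-places $K\to\mathbb R\cup\{\infty\}$, with topology generated by the subbasis $H'(b)=\{\zeta\in M(K)\mid \infty\ne\zeta(b)>0\}$, $b\in K$. A map $\iota:M(R(y))\to M(R(x,y))$ is compatible with restriction if $\iota(\zeta)|_{R(y)}=\zeta$ for all $\zeta$. The constant (Gauss) extension $\xi_y$ of $\xi$ to $R(x)(y)$ is the place extending $\xi$ whose valuation is the Gauss valuation: on a polynomial $\sum c_iy^i$ with all $c_i$ in the valuation ring of $\xi$ it acts by applying $\xi$ to the coefficients; its residue field is $\overline F(y)$. Every $\zeta\in M(R(y))$ is the identity on $R$; $\zeta_{\overline F}$ is the unique $\mathbb R$-place of $\overline F(y)$ which is the identity on $\overline F$ and satisfies $\zeta_{\overline F}(y)=\zeta(y)$. *)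

theory Defs
  imports "HOL-Analysis.Analysis" "HOL-Computational_Algebra.Polynomial"
          "HOL-Computational_Algebra.Fraction_Field"
begin

text \<open>A place of a subfield K of the field type 'a into the field 'b, with values
  in 'b extended by infinity (None = infinity).  By convention a place is None outside K,
  so that places on K are determined extensionally by their values on K.
  O = the set of a with finite value is then a valuation ring of K, the map is a ring
  homomorphism on O, and elements outside O are sent to infinity.\<close>

definition is_place :: "'a::field set \<Rightarrow> ('a \<Rightarrow> 'b::field option) \<Rightarrow> bool" where
  "is_place K \<phi> \<longleftrightarrow>
     (\<forall>a. a \<notin> K \<longrightarrow> \<phi> a = None) \<and>
     \<phi> 1 = Some 1 \<and>
     (\<forall>a\<in>K. \<forall>b\<in>K. \<forall>u v. \<phi> a = Some u \<longrightarrow> \<phi> b = Some v \<longrightarrow>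
         \<phi> (a + b) = Some (u + v) \<and> \<phi> (a * b) = Some (u * v)) \<and>
     (\<forall>a\<in>K. a \<noteq> 0 \<longrightarrow> (\<phi> a = None \<longleftrightarrow> \<phi> (inverse a) = Some 0))"

definition M :: "'a::field set \<Rightarrow> ('a \<Rightarrow> real option) set" where
  "M K = {\<zeta>. is_place K \<zeta>}"

definition H' :: "'a::field set \<Rightarrow> 'a \<Rightarrow> ('a \<Rightarrow> real option) set" where
  "H' K b = {\<zeta> \<in> M K. \<exists>v. \<zeta> b = Some v \<and> v > 0}"

definition M_top :: "'a::field set \<Rightarrow> ('a \<Rightarrow> real option) topology" where
  "M_top K = topology_generated_by {H' K b | b. b \<in> K}"

definition real_subfield :: "real set \<Rightarrow> bool" where
  "real_subfield R \<longleftrightarrow> 0 \<in> R \<and> 1 \<in> R \<and>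
     (\<forall>a\<in>R. \<forall>b\<in>R. a + b \<in> R \<and> a * b \<in> R \<and> - a \<in> R) \<and>
     (\<forall>a\<in>R. a \<noteq> 0 \<longrightarrow> inverse a \<in> R)"

text \<open>Real closed ordered field (Artin--Schreier characterisation): positive elements are
  squares and polynomials of odd degree have a root. A subfield of the reals is
  automatically archimedean (with the induced order).\<close>

definition real_closed_subfield :: "real set \<Rightarrow> bool" where
  "real_closed_subfield R \<longleftrightarrow> real_subfield R \<and>
     (\<forall>a\<in>R. a > 0 \<longrightarrow> (\<exists>b\<in>R. b * b = a)) \<and>
     (\<forall>p :: real poly. (\<forall>i. coeff p i \<in> R) \<and> odd (degree p) \<longrightarrow> (\<exists>r\<in>R. poly p r = 0))"

definition archimedean_subfield :: "real set \<Rightarrow> bool" where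
  "archimedean_subfield R \<longleftrightarrow> (\<forall>a\<in>R. \<exists>n::nat. a < of_nat n)"

text \<open>All three live in the ambient field real poly poly fract = Frac(IR[x][y]):
  the outer polynomial variable is y, the inner one is x.\<close>

type_synonym RXY = "real poly poly fract"

definition x_el :: RXY where "x_el = Fract [:[:0, 1:]:] 1"
definition y_el :: RXY where "y_el = Fract [:0, 1:] 1"

definition Rx :: "real set \<Rightarrow> RXY set" where
  "Rx R = {Fract [:p:] [:q:] | p q. (\<forall>i. coeff p i \<in> R) \<and> (\<forall>i. coeff q i \<in> R) \<and> q \<noteq> 0}"

definition Ry :: "real set \<Rightarrow> RXY set" where
  "Ry R = {Fract (map_poly (\<lambda>c. [:c:]) p) (map_poly (\<lambda>c. [:c:]) q) | p q.
              (\<forall>i. coeff p i \<in> R) \<and> (\<forall>i. coeff q i \<in> R) \<and> q \<noteq> 0}"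

definition Rxy :: "real set \<Rightarrow> RXY set" where
  "Rxy R = {Fract P Q | P Q. (\<forall>i j. coeff (coeff P i) j \<in> R) \<and>
                              (\<forall>i j. coeff (coeff Q i) j \<in> R) \<and> Q \<noteq> 0}"

definition Y_el :: "real poly fract" where "Y_el = Fract [:0, 1:] 1"
definition cst :: "real \<Rightarrow> real poly fract" where "cst r = Fract [:r:] 1"

definition Fbar :: "real set \<Rightarrow> (RXY \<Rightarrow> real option) \<Rightarrow> real set" where
  "Fbar R \<xi> = {r. \<exists>a \<in> Rx R. \<xi> a = Some r}"

definition Fbar_Y :: "real set \<Rightarrow> real poly fract set" where
  "Fbar_Y F = {Fract p q | p q. (\<forall>i. coeff p i \<in> F) \<and> (\<forall>i. coeff q i \<in> F) \<and> q \<noteq> 0}"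

definition is_gauss_ext :: "real set \<Rightarrow> (RXY \<Rightarrow> real option) \<Rightarrow> (RXY \<Rightarrow> real poly fract option) \<Rightarrow> bool" where
  "is_gauss_ext R \<xi> \<Phi> \<longleftrightarrow> is_place (Rxy R) \<Phi> \<and>
     (\<forall>a. \<Phi> a \<noteq> None \<longrightarrow> the (\<Phi> a) \<in> Fbar_Y (Fbar R \<xi>)) \<and>
     (\<forall>(c :: nat \<Rightarrow> RXY) n. (\<forall>i\<le>n. c i \<in> Rx R \<and> \<xi> (c i) \<noteq> None) \<longrightarrow>
        \<Phi> (\<Sum>i\<le>n. c i * y_el ^ i) = Some (\<Sum>i\<le>n. cst (the (\<xi> (c i))) * Y_el ^ i))"

definition xi_y :: "real set \<Rightarrow> (RXY \<Rightarrow> real option) \<Rightarrow> (RXY \<Rightarrow> real poly fract option)" where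
  "xi_y R \<xi> = (THE \<Phi>. is_gauss_ext R \<xi> \<Phi>)"

definition zeta_F :: "real set \<Rightarrow> (RXY \<Rightarrow> real option) \<Rightarrow> (RXY \<Rightarrow> real option)
                     \<Rightarrow> (real poly fract \<Rightarrow> real option)" where
  "zeta_F R \<xi> \<zeta> = (THE \<psi>. is_place (Fbar_Y (Fbar R \<xi>)) \<psi> \<and>
       (\<forall>r \<in> Fbar R \<xi>. \<psi> (cst r) = Some r) \<and> \<psi> Y_el = \<zeta> y_el)"

definition iota :: "real set \<Rightarrow> (RXY \<Rightarrow> real option) \<Rightarrow> (RXY \<Rightarrow> real option) \<Rightarrow> (RXY \<Rightarrow> real option)" where
  "iota R \<xi> \<zeta> = (\<lambda>a. case xi_y R \<xi> a of None \<Rightarrow> None | Some u \<Rightarrow> zeta_F R \<xi> \<zeta> u)"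

definition good_map :: "real set \<Rightarrow> (RXY \<Rightarrow> real option) \<Rightarrow>
                        ((RXY \<Rightarrow> real option) \<Rightarrow> (RXY \<Rightarrow> real option)) \<Rightarrow> bool" where
  "good_map R \<xi> \<iota> \<longleftrightarrow>
     continuous_map (M_top (Ry R)) (M_top (Rxy R)) \<iota> \<and>
     inj_on \<iota> (M (Ry R)) \<and>
     (\<forall>\<zeta> \<in> M (Ry R). \<forall>a \<in> Ry R. \<iota> \<zeta> a = \<zeta> a) \<and>
     (\<forall>\<zeta> \<in> M (Ry R). \<forall>a \<in> Rx R. \<iota> \<zeta> a = \<xi> a)"

end

(*
  Write an element of R(x,y) as N/D with N, D in R[x][y]
  and divide N and D by one of their y-coefficients of least \<xi>-valuation; the quotients have
  y-coefficients in the valuation ring of \<xi>, and reducing them gives polynomials over Fbar.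
  Places of F(Y) fixing F are evaluations at a point of the extended real line, which makes
  \<zeta>_Fbar explicit and gives compatibility with restriction and injectivity.

  Continuity: positivity of a rational function at a point of the extended line persists on a
  neighbourhood, and suitable sets H'(h) confine \<zeta>(y) to any such neighbourhood.
  Uniqueness: if another admissible map differed from iota at \<zeta>0, some D would be positive
  under one image and negative under the other, hence on a whole neighbourhood of \<zeta>0 by
  continuity.  That neighbourhood contains the places y \<mapsto> t for infinitely many real t, but
  for all t outside a finite set every place over \<xi> with y \<mapsto> t takes the same value at D.
*)
theory Submission
  imports Defs
begin

section \<open>Subfields and places\<close>

definition subfield :: "'a::field set \<Rightarrow> bool" where
  "subfield K \<longleftrightarrow> 0 \<in> K \<and> 1 \<in> K \<and> (\<forall>a\<in>K. \<forall>b\<in>K. a + b \<in> K \<and> a * b \<in> K \<and> - a \<in> K) \<and>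
     (\<forall>a\<in>K. inverse a \<in> K)"

lemma subfield_0: "subfield K \<Longrightarrow> 0 \<in> K" and subfield_1: "subfield K \<Longrightarrow> 1 \<in> K"
  and subfield_add: "subfield K \<Longrightarrow> a \<in> K \<Longrightarrow> b \<in> K \<Longrightarrow> a + b \<in> K"
  and subfield_mult: "subfield K \<Longrightarrow> a \<in> K \<Longrightarrow> b \<in> K \<Longrightarrow> a * b \<in> K"
  and subfield_uminus: "subfield K \<Longrightarrow> a \<in> K \<Longrightarrow> - a \<in> K"
  and subfield_inverse: "subfield K \<Longrightarrow> a \<in> K \<Longrightarrow> inverse a \<in> K"
  by (auto simp: subfield_def)

lemma subfield_UNIV: "subfield (UNIV :: 'a::field set)"
  by (simp add: subfield_def)

lemma real_subfield_imp_subfield: "real_subfield R \<Longrightarrow> subfield R"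
  by (auto simp: real_subfield_def subfield_def)

lemma subfield_diff: "subfield K \<Longrightarrow> a \<in> K \<Longrightarrow> b \<in> K \<Longrightarrow> a - b \<in> K"
  using subfield_add subfield_uminus by (metis diff_conv_add_uminus)

lemma subfield_divide: "subfield K \<Longrightarrow> a \<in> K \<Longrightarrow> b \<in> K \<Longrightarrow> a / b \<in> K"
  using subfield_mult subfield_inverse by (metis divide_inverse)

lemma subfield_sum: "subfield K \<Longrightarrow> (\<And>i. i \<in> I \<Longrightarrow> f i \<in> K) \<Longrightarrow> sum f I \<in> K"
  by (induct I rule: infinite_finite_induct) (auto intro: subfield_add subfield_0)

lemma subfield_power: "subfield K \<Longrightarrow> a \<in> K \<Longrightarrow> a ^ n \<in> K"
  by (induct n) (auto intro: subfield_mult subfield_1)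

lemma subfield_of_nat: "subfield K \<Longrightarrow> of_nat n \<in> K"
  by (induct n) (auto intro: subfield_add subfield_1 subfield_0)

lemma subfield_of_int: "subfield K \<Longrightarrow> of_int m \<in> K"
  by (cases m rule: int_cases)
    (auto intro: subfield_uminus subfield_of_nat subfield_add subfield_1 simp del: of_nat_Suc)

lemma subfield_fracts:
  fixes P :: "'a::idom \<Rightarrow> bool"
  assumes "P 0" "P 1" "\<And>p q. P p \<Longrightarrow> P q \<Longrightarrow> P (p + q)" "\<And>p q. P p \<Longrightarrow> P q \<Longrightarrow> P (p * q)"
    "\<And>p. P p \<Longrightarrow> P (- p)"
  shows "subfield {Fract p q | p q. P p \<and> P q \<and> q \<noteq> 0}" (is "subfield ?K")
proof -
  have mem: "P p \<Longrightarrow> P q \<Longrightarrow> q \<noteq> 0 \<Longrightarrow> Fract p q \<in> ?K" for p q by blast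
  have zero: "0 \<in> ?K" and one: "1 \<in> ?K"
    using mem[of 0 1] mem[of 1 1] assms(1,2) by (simp_all add: fract_collapse)
  have "a + b \<in> ?K \<and> a * b \<in> ?K \<and> - a \<in> ?K" if a: "a \<in> ?K" and b: "b \<in> ?K" for a b
  proof -
    obtain p1 q1 p2 q2 where "P p1" "P q1" "q1 \<noteq> 0" "a = Fract p1 q1" "P p2" "P q2" "q2 \<noteq> 0" "b = Fract p2 q2"
      using a b by blast
    then show ?thesis
      using mem[of "p1 * q2 + p2 * q1" "q1 * q2"] mem[of "p1 * p2" "q1 * q2"] mem[of "- p1" q1] assms by simp
  qed
  moreover have "inverse a \<in> ?K" if a: "a \<in> ?K" for a
  proof -
    obtain p q where "P p" "P q" "q \<noteq> 0" "a = Fract p q" using a by blast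
    then show ?thesis using mem[of q p] zero by (cases "p = 0") (simp_all add: fract_collapse)
  qed
  ultimately show ?thesis using zero one unfolding subfield_def by (intro conjI ballI) simp_all
qed

lemma subfield_image:
  assumes K: "subfield K" and h: "\<And>a b. h (a + b) = h a + h b" "\<And>a b. h (a * b) = h a * h b"
    "\<And>a. h (inverse a) = inverse (h a)" "h 1 = 1"
  shows "subfield (h ` K)"
proof -
  have h0: "h 0 = 0" using h(1)[of 0 0] by (metis add.right_neutral add_cancel_right_right)
  have hminus: "h (- a) = - h a" for a using h(1)[of "- a" a] h0 by (simp add: eq_neg_iff_add_eq_0)
  show ?thesis
    unfolding subfield_def
  proof (intro conjI ballI)
    show "0 \<in> h ` K" "1 \<in> h ` K"
      using image_eqI[of 0 h 0 K] image_eqI[of 1 h 1 K] subfield_0[OF K] subfield_1[OF K] h0 h(4) by auto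
  next
    fix a b assume "a \<in> h ` K" "b \<in> h ` K"
    then obtain a' b' where ab: "a' \<in> K" "b' \<in> K" "a = h a'" "b = h b'" by blast
    show "a + b \<in> h ` K" "a * b \<in> h ` K" "- a \<in> h ` K"
      using image_eqI[of "a + b" h "a' + b'" K] image_eqI[of "a * b" h "a' * b'" K] image_eqI[of "- a" h "- a'" K]
        subfield_add[OF K ab(1,2)] subfield_mult[OF K ab(1,2)] subfield_uminus[OF K ab(1)] ab h(1,2) hminus
      by auto
  next
    fix a assume "a \<in> h ` K"
    then obtain a' where "a' \<in> K" "a = h a'" by blast
    then show "inverse a \<in> h ` K"
      using image_eqI[of "inverse a" h "inverse a'" K] subfield_inverse[OF K] h(3) by auto
  qed
qed

lemma Rats_subset_subfield: "subfield R \<Longrightarrow> q \<in> \<rat> \<Longrightarrow> q \<in> (R :: real set)"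
  by (auto elim!: Rats_cases' intro!: subfield_divide subfield_of_int)

context
  fixes K :: "'a::field set" and \<phi> :: "'a \<Rightarrow> 'b::field option"
  assumes P: "is_place K \<phi>" and S: "subfield K"
begin

lemma place_notin: "a \<notin> K \<Longrightarrow> \<phi> a = None"
  using P by (auto simp: is_place_def)

lemma place_one: "\<phi> 1 = Some 1"
  using P by (auto simp: is_place_def)

lemma place_add: "a \<in> K \<Longrightarrow> b \<in> K \<Longrightarrow> \<phi> a = Some u \<Longrightarrow> \<phi> b = Some v \<Longrightarrow> \<phi> (a + b) = Some (u + v)"
  using P by (auto simp: is_place_def)

lemma place_mult: "a \<in> K \<Longrightarrow> b \<in> K \<Longrightarrow> \<phi> a = Some u \<Longrightarrow> \<phi> b = Some v \<Longrightarrow> \<phi> (a * b) = Some (u * v)"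
  using P by (auto simp: is_place_def)

lemma place_inv_iff: "a \<in> K \<Longrightarrow> a \<noteq> 0 \<Longrightarrow> \<phi> a = None \<longleftrightarrow> \<phi> (inverse a) = Some 0"
  using P by (auto simp: is_place_def)

lemma place_minus_one: "\<phi> (-1) = Some (-1)"
proof -
  have m1: "-1 \<in> K" using S by (simp add: subfield_1 subfield_uminus)
  have "\<phi> (-1) \<noteq> None"
    using place_inv_iff[OF m1] by auto
  then obtain w where w: "\<phi> (-1) = Some w" by auto
  have e1: "\<phi> 0 = Some (1 + w)" using place_add[OF subfield_1[OF S] m1 place_one w] by simp
  have "\<phi> (0 + 0) = Some ((1 + w) + (1 + w))" using place_add[OF _ _ e1 e1] S subfield_0 by blast
  then have "1 + w = 0" using e1 by (simp add: add.commute)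
  then have "w = -1" by (metis add.commute add_eq_0_iff2 minus_minus)
  then show ?thesis using w by simp
qed

lemma place_0: "\<phi> 0 = Some 0"
proof -
  have m1: "-1 \<in> K" using S by (simp add: subfield_1 subfield_uminus)
  have "\<phi> (1 + -1) = Some (1 + -1)" using place_add[OF subfield_1[OF S] m1 place_one place_minus_one] .
  then show ?thesis by simp
qed

lemma place_uminus: "a \<in> K \<Longrightarrow> \<phi> a = Some u \<Longrightarrow> \<phi> (- a) = Some (- u)"
  using place_mult[of "-1" a "-1" u] place_minus_one S by (simp add: subfield_1 subfield_uminus)

lemma place_diff: "a \<in> K \<Longrightarrow> b \<in> K \<Longrightarrow> \<phi> a = Some u \<Longrightarrow> \<phi> b = Some v \<Longrightarrow> \<phi> (a - b) = Some (u - v)"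
  using place_add[of a "-b" u "-v"] place_uminus[of b v] S subfield_uminus by auto

lemma place_None_nz: "\<phi> a = None \<Longrightarrow> a \<noteq> 0"
  using place_0 by auto

lemma place_inverse_None: "a \<in> K \<Longrightarrow> \<phi> a = None \<Longrightarrow> \<phi> (inverse a) = Some 0"
  using place_inv_iff place_None_nz by blast

lemma place_inverse_0: "a \<in> K \<Longrightarrow> a \<noteq> 0 \<Longrightarrow> \<phi> a = Some 0 \<Longrightarrow> \<phi> (inverse a) = None"
  using place_inv_iff[of "inverse a"] S subfield_inverse by fastforce

lemma place_inverse: "a \<in> K \<Longrightarrow> \<phi> a = Some u \<Longrightarrow> u \<noteq> 0 \<Longrightarrow> \<phi> (inverse a) = Some (inverse u)"
proof -
  assume a: "a \<in> K" "\<phi> a = Some u" "u \<noteq> 0"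
  have a0: "a \<noteq> 0" using a place_0 by auto
  have ia: "inverse a \<in> K" using S a subfield_inverse by blast
  have "\<phi> (inverse a) \<noteq> None"
    using place_inverse_None[OF ia] a by auto
  then obtain w where w: "\<phi> (inverse a) = Some w" by auto
  have "\<phi> (a * inverse a) = Some (u * w)" using place_mult[OF a(1) ia a(2) w] .
  then have "u * w = 1" using a0 place_one by simp
  then show ?thesis using w a(3) by (metis inverse_unique)
qed

lemma place_mult_None: "a \<in> K \<Longrightarrow> b \<in> K \<Longrightarrow> \<phi> a = None \<Longrightarrow> \<phi> b = Some v \<Longrightarrow> v \<noteq> 0 \<Longrightarrow>
    \<phi> (a * b) = None"
proof (rule ccontr)
  assume a: "a \<in> K" "b \<in> K" "\<phi> a = None" "\<phi> b = Some v" "v \<noteq> 0" "\<phi> (a * b) \<noteq> None"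
  then obtain w where w: "\<phi> (a * b) = Some w" by auto
  have b0: "b \<noteq> 0" using a place_0 by auto
  have "\<phi> (a * b * inverse b) = Some (w * inverse v)"
    using place_mult[OF _ _ w place_inverse[OF a(2,4,5)]] S a by (simp add: subfield_mult subfield_inverse)
  then show False using a(3) b0 by (simp add: mult.assoc)
qed

lemma place_mult_None': "a \<in> K \<Longrightarrow> b \<in> K \<Longrightarrow> \<phi> a = Some v \<Longrightarrow> \<phi> b = None \<Longrightarrow> v \<noteq> 0 \<Longrightarrow>
    \<phi> (a * b) = None"
  using place_mult_None[of b a v] by (simp add: mult.commute)

lemma place_mult_NoneNone: "a \<in> K \<Longrightarrow> b \<in> K \<Longrightarrow> \<phi> a = None \<Longrightarrow> \<phi> b = None \<Longrightarrow> \<phi> (a * b) = None"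
proof -
  assume a: "a \<in> K" "b \<in> K" "\<phi> a = None" "\<phi> b = None"
  have "\<phi> (inverse a * inverse b) = Some (0 * 0)"
    using place_mult[OF _ _ place_inverse_None[OF a(1,3)] place_inverse_None[OF a(2,4)]] S a
    by (simp add: subfield_inverse)
  then have "\<phi> (inverse (a * b)) = Some 0" by (simp add: mult.commute)
  moreover have "a * b \<noteq> 0" using a place_None_nz by auto
  ultimately show ?thesis using place_inv_iff[of "a*b"] S a subfield_mult by blast
qed

lemma place_add_None: "a \<in> K \<Longrightarrow> b \<in> K \<Longrightarrow> \<phi> a = None \<Longrightarrow> \<phi> b = Some v \<Longrightarrow> \<phi> (a + b) = None"
proof (rule ccontr)
  assume a: "a \<in> K" "b \<in> K" "\<phi> a = None" "\<phi> b = Some v" "\<phi> (a + b) \<noteq> None"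
  then obtain w where "\<phi> (a + b) = Some w" by auto
  then have "\<phi> (a + b - b) = Some (w - v)" using place_diff a S subfield_add by blast
  then show False using a by simp
qed

lemma place_sum: "(\<And>i. i \<in> I \<Longrightarrow> f i \<in> K \<and> \<phi> (f i) = Some (g i)) \<Longrightarrow> \<phi> (sum f I) = Some (sum g I)"
proof (induct I rule: infinite_finite_induct)
  case (insert x F)
  then show ?case using place_add[of "f x" "sum f F"] subfield_sum[OF S, of F f] by auto
qed (auto simp: place_0)

lemma place_power: "a \<in> K \<Longrightarrow> \<phi> a = Some u \<Longrightarrow> \<phi> (a ^ n) = Some (u ^ n)"
  by (induct n) (auto simp: place_one intro!: place_mult subfield_power[OF S])

lemma place_of_nat: "\<phi> (of_nat n) = Some (of_nat n)"
  by (induct n) (auto simp: place_0 add.commute intro!: place_add subfield_of_nat[OF S] subfield_1[OF S] place_one)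

lemma place_of_int: "\<phi> (of_int m) = Some (of_int m)"
  by (cases m rule: int_cases) (auto simp: place_of_nat simp del: of_nat_Suc
      intro!: place_uminus subfield_of_nat[OF S])

lemma place_divide: "a \<in> K \<Longrightarrow> b \<in> K \<Longrightarrow> \<phi> a = Some u \<Longrightarrow> \<phi> b = Some v \<Longrightarrow> v \<noteq> 0 \<Longrightarrow>
   \<phi> (a / b) = Some (u / v)"
  by (simp add: divide_inverse place_mult place_inverse subfield_inverse[OF S])

lemma subfield_place_values: "subfield {u. \<exists>a\<in>K. \<phi> a = Some u}"
  unfolding subfield_def
proof (intro conjI ballI)
  show "0 \<in> {u. \<exists>a\<in>K. \<phi> a = Some u}" "1 \<in> {u. \<exists>a\<in>K. \<phi> a = Some u}"
    using place_0 place_one subfield_0[OF S] subfield_1[OF S] by auto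
next
  fix u v assume "u \<in> {u. \<exists>a\<in>K. \<phi> a = Some u}" "v \<in> {u. \<exists>a\<in>K. \<phi> a = Some u}"
  then obtain a b where ab: "a \<in> K" "\<phi> a = Some u" "b \<in> K" "\<phi> b = Some v" by blast
  show "u + v \<in> {u. \<exists>a\<in>K. \<phi> a = Some u}" "u * v \<in> {u. \<exists>a\<in>K. \<phi> a = Some u}"
    "- u \<in> {u. \<exists>a\<in>K. \<phi> a = Some u}"
    using place_add[OF ab(1,3,2,4)] place_mult[OF ab(1,3,2,4)] place_uminus[OF ab(1,2)]
      subfield_add[OF S ab(1,3)] subfield_mult[OF S ab(1,3)] subfield_uminus[OF S ab(1)] by blast+
next
  fix u assume "u \<in> {u. \<exists>a\<in>K. \<phi> a = Some u}"
  then obtain a where a: "a \<in> K" "\<phi> a = Some u" by blast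
  then show "inverse u \<in> {u. \<exists>a\<in>K. \<phi> a = Some u}"
    using place_0 place_inverse[OF a] subfield_0[OF S] subfield_inverse[OF S a(1)] by (cases "u = 0") auto
qed

end

lemma place_divide_trans:
  fixes \<phi> :: "'a::field \<Rightarrow> 'b::field option"
  assumes P: "is_place K \<phi>" and S: "subfield K" and K: "x \<in> K" "b \<in> K" "a \<in> K" and b: "b \<noteq> 0"
    and "\<phi> (x / b) \<noteq> None" "\<phi> (b / a) \<noteq> None"
  shows "\<phi> (x / a) \<noteq> None"
proof -
  obtain u w where "\<phi> (x / b) = Some u" "\<phi> (b / a) = Some w" using assms(7,8) by auto
  from place_mult[OF P S subfield_divide[OF S K(1,2)] subfield_divide[OF S K(2,3)] this]
  show ?thesis using b by simp
qed

lemma place_dominant_element: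
  fixes \<phi> :: "'a::field \<Rightarrow> 'b::field option" and c :: "nat \<Rightarrow> 'a"
  assumes P: "is_place K \<phi>" and S: "subfield K"
    and "\<forall>i\<le>n. c i \<in> K" and "\<exists>i\<le>n. c i \<noteq> 0"
  shows "\<exists>j\<le>n. c j \<noteq> 0 \<and> (\<forall>i\<le>n. \<phi> (c i / c j) \<noteq> None)"
  using assms(3,4)
proof (induction n)
  case 0
  then show ?case using place_one[OF P S] by auto
next
  case (Suc n)
  have cK: "c i \<in> K" if "i \<le> Suc n" for i using Suc.prems(1) that by blast
  show ?case
  proof (cases "\<exists>i\<le>n. c i \<noteq> 0")
    case False
    then have "c (Suc n) \<noteq> 0" using Suc.prems(2) le_Suc_eq by blast
    moreover have "\<phi> (c i / c (Suc n)) \<noteq> None" if "i \<le> Suc n" for i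
      using that False \<open>c (Suc n) \<noteq> 0\<close> place_0[OF P S] place_one[OF P S] by (cases "i = Suc n") auto
    ultimately show ?thesis by blast
  next
    case True
    then obtain j where j: "j \<le> n" "c j \<noteq> 0" and fin: "\<forall>i\<le>n. \<phi> (c i / c j) \<noteq> None"
      using Suc by auto
    show ?thesis
    proof (cases "\<phi> (c (Suc n) / c j) = None")
      case False
      then show ?thesis using j fin le_Suc_eq by (intro exI[of _ j]) auto
    next
      case True
      have a0: "c (Suc n) \<noteq> 0" using True place_0[OF P S] by auto
      have ja: "\<phi> (c j / c (Suc n)) = Some 0"
        using place_inverse_None[OF P S subfield_divide[OF S cK cK] True] j(1) by simp
      have "\<phi> (c i / c (Suc n)) \<noteq> None" if i: "i \<le> Suc n" for i
      proof (cases "i = Suc n")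
        case True
        then show ?thesis using a0 place_one[OF P S] by simp
      next
        case False
        then have "i \<le> n" using i by simp
        then show ?thesis
          using place_divide_trans[OF P S cK[OF i] cK[of j] cK[of "Suc n"] j(2)] fin ja j(1) by simp
      qed
      then show ?thesis using a0 by blast
    qed
  qed
qed

lemma place_comp:
  fixes \<phi> :: "'a::field \<Rightarrow> 'b::field option" and \<psi> :: "'b \<Rightarrow> 'c::field option"
  assumes P: "is_place K \<phi>" "subfield K" and Q: "is_place L \<psi>" "subfield L"
    and V: "\<And>a u. \<phi> a = Some u \<Longrightarrow> u \<in> L"
  shows "is_place K (\<lambda>a. case \<phi> a of None \<Rightarrow> None | Some u \<Rightarrow> \<psi> u)"
  unfolding is_place_def
proof (intro conjI ballI allI impI)
  show "(case \<phi> a of None \<Rightarrow> None | Some u \<Rightarrow> \<psi> u) = None" if "a \<notin> K" for a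
    using place_notin[OF P that] by simp
  show "(case \<phi> 1 of None \<Rightarrow> None | Some u \<Rightarrow> \<psi> u) = Some 1"
    using place_one[OF P] place_one[OF Q] by simp
next
  fix a b u v assume ab: "a \<in> K" "b \<in> K" and
    u: "(case \<phi> a of None \<Rightarrow> None | Some u \<Rightarrow> \<psi> u) = Some u" and
    v: "(case \<phi> b of None \<Rightarrow> None | Some u \<Rightarrow> \<psi> u) = Some v"
  obtain a' where a': "\<phi> a = Some a'" "\<psi> a' = Some u" using u by (cases "\<phi> a") auto
  obtain b' where b': "\<phi> b = Some b'" "\<psi> b' = Some v" using v by (cases "\<phi> b") auto
  show "(case \<phi> (a + b) of None \<Rightarrow> None | Some u \<Rightarrow> \<psi> u) = Some (u + v)"
    using place_add[OF P ab a'(1) b'(1)] place_add[OF Q V[OF a'(1)] V[OF b'(1)] a'(2) b'(2)] by simp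
  show "(case \<phi> (a * b) of None \<Rightarrow> None | Some u \<Rightarrow> \<psi> u) = Some (u * v)"
    using place_mult[OF P ab a'(1) b'(1)] place_mult[OF Q V[OF a'(1)] V[OF b'(1)] a'(2) b'(2)] by simp
next
  fix a assume a: "a \<in> K" "a \<noteq> 0"
  show "(case \<phi> a of None \<Rightarrow> None | Some u \<Rightarrow> \<psi> u) = None \<longleftrightarrow>
        (case \<phi> (inverse a) of None \<Rightarrow> None | Some u \<Rightarrow> \<psi> u) = Some 0"
  proof (cases "\<phi> a")
    case None
    then show ?thesis using place_inverse_None[OF P a(1)] place_0[OF Q] by simp
  next
    case (Some u)
    show ?thesis
    proof (cases "u = 0")
      case True
      then show ?thesis using Some place_inverse_0[OF P a] place_0[OF Q] by simp
    next
      case False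
      have "\<phi> (inverse a) = Some (inverse u)" using place_inverse[OF P a(1) Some False] .
      then show ?thesis using Some place_inv_iff[OF Q V[OF Some] False] by simp
    qed
  qed
qed

lemma place_restrict:
  assumes "is_place L \<psi>" "subfield L" "subfield K" "K \<subseteq> L"
  shows "is_place K (\<lambda>a. if a \<in> K then \<psi> a else None)"
  using assms unfolding is_place_def subfield_def by (auto simp: subset_iff)

lemma place_pullback:
  fixes h :: "'a::field \<Rightarrow> 'b::field"
  assumes P: "is_place L \<phi>" "subfield L" and K: "subfield K"
    and hK: "\<And>a. a \<in> K \<Longrightarrow> h a \<in> L"
    and hadd: "\<And>a b. a \<in> K \<Longrightarrow> b \<in> K \<Longrightarrow> h (a + b) = h a + h b"
    and hmult: "\<And>a b. a \<in> K \<Longrightarrow> b \<in> K \<Longrightarrow> h (a * b) = h a * h b"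
    and hinv: "\<And>a. a \<in> K \<Longrightarrow> h (inverse a) = inverse (h a)"
    and h1: "h 1 = 1" and hinj: "\<And>a. a \<in> K \<Longrightarrow> h a = 0 \<Longrightarrow> a = 0"
  shows "is_place K (\<lambda>a. if a \<in> K then \<phi> (h a) else None)"
  unfolding is_place_def
proof (intro conjI ballI allI impI)
  show "(if 1 \<in> K then \<phi> (h 1) else None) = Some 1" using K h1 place_one[OF P] by (simp add: subfield_1)
next
  fix a b u v assume "a \<in> K" "b \<in> K" "(if a \<in> K then \<phi> (h a) else None) = Some u"
    "(if b \<in> K then \<phi> (h b) else None) = Some v"
  then show "(if a + b \<in> K then \<phi> (h (a + b)) else None) = Some (u + v)"
    "(if a * b \<in> K then \<phi> (h (a * b)) else None) = Some (u * v)"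
    using place_add[OF P] place_mult[OF P] hK hadd hmult K by (auto simp: subfield_add subfield_mult)
next
  fix a assume a: "a \<in> K" "a \<noteq> 0"
  then have "h a \<noteq> 0" using hinj by blast
  then show "(if a \<in> K then \<phi> (h a) else None) = None \<longleftrightarrow>
    (if inverse a \<in> K then \<phi> (h (inverse a)) else None) = Some 0"
    using place_inv_iff[OF P hK[OF a(1)]] a hinv K by (simp add: subfield_inverse)
qed auto

lemma place_image:
  fixes h :: "'a::field \<Rightarrow> 'b::field"
  assumes P: "is_place K \<phi>" and K: "subfield K" and inj: "inj h"
    and hadd: "\<And>a b. h (a + b) = h a + h b" and hmult: "\<And>a b. h (a * b) = h a * h b"
    and hinv: "\<And>a. h (inverse a) = inverse (h a)" and h1: "h 1 = 1"
  shows "is_place (h ` K) (\<lambda>b. if b \<in> h ` K then \<phi> (inv_into K h b) else None)"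
proof -
  let ?g = "inv_into K h"
  have L: "subfield (h ` K)" by (rule subfield_image[OF K hadd hmult hinv h1])
  have gK: "?g b \<in> K" if "b \<in> h ` K" for b using that by (rule inv_into_into)
  have hg: "h (?g b) = b" if "b \<in> h ` K" for b using that by (rule f_inv_into_f)
  have g_eq: "?g (h a) = a" if "a \<in> K" for a using inv_into_f_f[OF inj_on_subset[OF inj subset_UNIV] that] .
  have "?g (a + b) = ?g a + ?g b" "?g (a * b) = ?g a * ?g b" if "a \<in> h ` K" "b \<in> h ` K" for a b
    using g_eq[of "?g a + ?g b"] g_eq[of "?g a * ?g b"] subfield_add[OF K] subfield_mult[OF K] gK[OF that(1)] gK[OF that(2)]
    by (simp_all add: hadd hmult hg that)
  moreover have "?g (inverse a) = inverse (?g a)" if "a \<in> h ` K" for a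
    using g_eq[of "inverse (?g a)"] subfield_inverse[OF K gK[OF that]] by (simp add: hinv hg that)
  moreover have "?g 1 = 1" using g_eq[OF subfield_1[OF K]] h1 by simp
  moreover have h0: "h 0 = 0" using hadd[of 0 0] by (metis add.right_neutral add_cancel_right_right)
  moreover have "a = 0" if "a \<in> h ` K" "?g a = 0" for a
    using hg[OF that(1)] that(2) h0 by simp
  ultimately show ?thesis by (intro place_pullback[OF P K L gK]) auto
qed

section \<open>Places fix a real closed subfield of the reals\<close>

definition constXY :: "real \<Rightarrow> RXY" where "constXY r = Fract [:[:r:]:] 1"

lemma constXY_add: "constXY (a + b) = constXY a + constXY b"
  and constXY_mult: "constXY (a * b) = constXY a * constXY b"
  and constXY_uminus: "constXY (- a) = - constXY a" and constXY_0: "constXY 0 = 0"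
  and constXY_1: "constXY 1 = 1" and constXY_diff: "constXY (a - b) = constXY a - constXY b"
  by (simp_all add: constXY_def pCons_one fract_collapse flip: One_fract_def)

lemma constXY_of_nat: "constXY (of_nat n) = of_nat n"
  by (induct n) (simp_all add: constXY_add constXY_0 constXY_1)

lemma constXY_of_int: "constXY (of_int m) = of_int m"
  by (cases m rule: int_cases) (simp_all add: constXY_of_nat constXY_uminus del: of_nat_Suc)

lemma constXY_inverse: "constXY (inverse a) = inverse (constXY a)"
  by (cases "a = 0") (simp_all add: constXY_def fract_collapse eq_fract pCons_one)

lemma real_closed_imp_subfield: "real_closed_subfield R \<Longrightarrow> subfield R"
  by (simp add: real_closed_subfield_def real_subfield_imp_subfield)

lemma real_closed_sqrt: "real_closed_subfield R \<Longrightarrow> a \<in> R \<Longrightarrow> a > 0 \<Longrightarrow> \<exists>b\<in>R. b * b = a"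
  by (simp add: real_closed_subfield_def)

context
  fixes R :: "real set" and K :: "RXY set" and \<phi> :: "RXY \<Rightarrow> real option"
  assumes RC: "real_closed_subfield R" and P: "is_place K \<phi>" "subfield K"
    and const_in: "\<And>r. r \<in> R \<Longrightarrow> constXY r \<in> K"
begin

text \<open>If \<phi>(r) = \<infinity>, then s = |1/r| has \<phi>(s) = 0 and n s - 1 > 0 for large n, so n s - 1 is a
  square in R whose value under \<phi> is -1.\<close>

lemma place_const_finite: "r \<in> R \<Longrightarrow> \<phi> (constXY r) \<noteq> None"
proof
  assume r: "r \<in> R" and N: "\<phi> (constXY r) = None"
  note RS = real_closed_imp_subfield[OF RC]
  have r0: "r \<noteq> 0" using N place_0[OF P] constXY_0 by auto
  define s where "s = \<bar>inverse r\<bar>"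
  have sR: "s \<in> R" using RS r by (auto simp: s_def abs_if intro: subfield_inverse subfield_uminus)
  have s0: "s > 0" using r0 by (simp add: s_def)
  have "\<phi> (inverse (constXY r)) = Some 0" using place_inverse_None[OF P const_in[OF r] N] .
  then have ks: "\<phi> (constXY s) = Some 0"
    using place_uminus[OF P, of "inverse (constXY r)" 0] const_in r RS P(2)
    by (auto simp: s_def abs_if constXY_uminus constXY_inverse subfield_inverse)
  obtain n :: nat where n: "inverse s < of_nat n" using reals_Archimedean2 by blast
  define m where "m = of_nat n * s - 1"
  have m0: "m > 0" using n s0 by (simp add: m_def field_simps)
  have mR: "m \<in> R" using RS sR by (simp add: m_def subfield_diff subfield_mult subfield_of_nat subfield_1)
  obtain w where w: "w \<in> R" "w * w = m" using real_closed_sqrt[OF RC mR m0] by blast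
  have "\<phi> (of_nat n * constXY s - 1) = Some (of_nat n * 0 - 1)"
    using place_diff[OF P _ _ place_mult[OF P _ _ place_of_nat[OF P] ks] place_one[OF P]] const_in[OF sR] P(2)
    by (simp add: subfield_mult subfield_of_nat subfield_1)
  moreover have "constXY w * constXY w = of_nat n * constXY s - 1"
  proof -
    have "constXY w * constXY w = constXY m" using w(2) by (simp flip: constXY_mult)
    then show ?thesis by (simp add: m_def constXY_diff constXY_mult constXY_of_nat constXY_1)
  qed
  ultimately have km: "\<phi> (constXY w * constXY w) = Some (-1)" by simp
  show False
  proof (cases "\<phi> (constXY w)")
    case None
    then show False using place_mult_NoneNone[OF P const_in[OF w(1)] const_in[OF w(1)]] km by simp
  next
    case (Some u)
    then have "u * u = -1" using place_mult[OF P const_in[OF w(1)] const_in[OF w(1)]] km by simp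
    moreover have "u * u \<ge> 0" by simp
    ultimately show False by simp
  qed
qed

lemma place_const_nonneg:
  assumes r: "r \<in> R" "r > 0" and u: "\<phi> (constXY r) = Some u"
  shows "u \<ge> 0"
proof -
  obtain w where w: "w \<in> R" "w * w = r" using real_closed_sqrt[OF RC] r by blast
  obtain u' where u': "\<phi> (constXY w) = Some u'" using place_const_finite[OF w(1)] by auto
  have "\<phi> (constXY r) = Some (u' * u')"
    using place_mult[OF P const_in[OF w(1)] const_in[OF w(1)] u' u'] w(2) constXY_mult[of w w] by simp
  then show ?thesis using u by simp
qed

lemma place_const_mono:
  assumes "a \<in> R" "b \<in> R" "a < b" "\<phi> (constXY a) = Some u" "\<phi> (constXY b) = Some v"
  shows "u \<le> v"
proof -
  have "\<phi> (constXY (b - a)) = Some (v - u)"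
    using place_diff[OF P const_in const_in] assms by (simp add: constXY_diff)
  moreover have "b - a \<in> R" "b - a > 0" using assms subfield_diff[OF real_closed_imp_subfield[OF RC]] by auto
  ultimately show ?thesis using place_const_nonneg[of "b - a" "v - u"] by simp
qed

lemma place_const_rat: "q \<in> \<rat> \<Longrightarrow> \<phi> (constXY q) = Some q"
proof (elim Rats_cases')
  fix m n :: int assume n: "n > 0" and q: "q = of_int m / of_int n"
  have "constXY q = of_int m / of_int n"
    by (simp add: q divide_inverse constXY_mult constXY_inverse constXY_of_int)
  then show ?thesis
    using place_divide[OF P subfield_of_int subfield_of_int place_of_int[OF P] place_of_int[OF P]] P(2) n q
    by simp
qed

text \<open>A monotone map fixing the rationals is the identity.\<close>

lemma place_const: "r \<in> R \<Longrightarrow> \<phi> (constXY r) = Some r"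
proof -
  assume r: "r \<in> R"
  obtain u where u: "\<phi> (constXY r) = Some u" using place_const_finite[OF r] by auto
  have Rats_R: "q \<in> \<rat> \<Longrightarrow> q \<in> R" for q using Rats_subset_subfield[OF real_closed_imp_subfield[OF RC]] .
  have "\<not> r < u"
  proof
    assume "r < u"
    then obtain q where "q \<in> \<rat>" "r < q" "q < u" using Rats_dense_in_real by blast
    then show False using place_const_mono[OF r Rats_R _ u place_const_rat] by force
  qed
  moreover have "\<not> u < r"
  proof
    assume "u < r"
    then obtain q where "q \<in> \<rat>" "u < q" "q < r" using Rats_dense_in_real by blast
    then show False using place_const_mono[OF Rats_R r _ place_const_rat u] by force
  qed
  ultimately show ?thesis using u by simp
qed

end

section \<open>Polynomials over a subfield of the reals\<close>

definition poly_over :: "real set \<Rightarrow> real poly \<Rightarrow> bool" where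
  "poly_over F p \<longleftrightarrow> (\<forall>i. coeff p i \<in> F)"

context
  fixes F :: "real set" assumes S: "subfield F"
begin

lemma poly_over_0: "poly_over F 0" using S by (simp add: poly_over_def subfield_0)
lemma poly_over_1: "poly_over F 1" using S by (simp add: poly_over_def coeff_1 subfield_0 subfield_1)
lemma poly_over_const: "c \<in> F \<Longrightarrow> poly_over F [:c:]" using S by (simp add: poly_over_def coeff_pCons split: nat.split add: subfield_0)
lemma poly_over_X: "poly_over F [:0, 1:]" using S by (simp add: poly_over_def coeff_pCons split: nat.split add: subfield_0 subfield_1)
lemma poly_over_add: "poly_over F p \<Longrightarrow> poly_over F q \<Longrightarrow> poly_over F (p + q)" using S by (simp add: poly_over_def subfield_add)
lemma poly_over_uminus: "poly_over F p \<Longrightarrow> poly_over F (- p)" using S by (simp add: poly_over_def subfield_uminus)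
lemma poly_over_diff: "poly_over F p \<Longrightarrow> poly_over F q \<Longrightarrow> poly_over F (p - q)" using S by (simp add: poly_over_def subfield_diff)
lemma poly_over_mult: "poly_over F p \<Longrightarrow> poly_over F q \<Longrightarrow> poly_over F (p * q)"
  using S by (auto simp: poly_over_def coeff_mult intro!: subfield_sum subfield_mult)
lemma poly_over_monom: "c \<in> F \<Longrightarrow> poly_over F (monom c k)" using S by (simp add: poly_over_def coeff_monom subfield_0)

lemma poly_over_cancel_lead:
  assumes p: "poly_over F p" "p \<noteq> 0" and q: "poly_over F q" "q \<noteq> 0" and d: "degree q \<le> degree p"
  obtains c k where "c \<in> F" "p - monom c k * q = 0 \<or> degree (p - monom c k * q) < degree p"
proof -
  define c where "c = lead_coeff p / lead_coeff q"
  define k where "k = degree p - degree q"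
  have c0: "c \<noteq> 0" using p(2) q(2) by (simp add: c_def)
  have cF: "c \<in> F" using p(1) q(1) S by (simp add: c_def poly_over_def subfield_divide)
  have dm: "degree (monom c k * q) = degree p"
    using c0 q(2) d by (simp add: degree_mult_eq degree_monom_eq k_def)
  have "coeff (monom c k * q) (degree p) = c * lead_coeff q"
    using dm[symmetric] by (simp add: lead_coeff_mult lead_coeff_monom degree_monom_eq c0)
  then have "coeff (p - monom c k * q) (degree p) = 0" using q(2) by (simp add: c_def)
  moreover have "degree (p - monom c k * q) \<le> degree p" using dm by (simp add: degree_diff_le)
  ultimately have "p - monom c k * q = 0 \<or> degree (p - monom c k * q) < degree p"
    by (metis le_neq_implies_less leading_coeff_0_iff)
  then show ?thesis using that cF by blast
qed

lemma poly_over_divmod: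
  assumes "poly_over F p" "poly_over F q" "q \<noteq> 0"
  shows "\<exists>s t. poly_over F s \<and> poly_over F t \<and> p = s * q + t \<and> (t = 0 \<or> degree t < degree q)"
  using assms(1)
proof (induction "degree p" arbitrary: p rule: less_induct)
  case less
  show ?case
  proof (cases "p = 0 \<or> degree p < degree q")
    case True
    then show ?thesis using less.prems poly_over_0 by (intro exI[of _ 0] exI[of _ p]) auto
  next
    case False
    then obtain c k where c: "c \<in> F" and red: "p - monom c k * q = 0 \<or> degree (p - monom c k * q) < degree p"
      using poly_over_cancel_lead[OF less.prems _ assms(2,3)] by (metis not_le)
    have p': "poly_over F (p - monom c k * q)" using less.prems c assms(2) by (simp add: poly_over_diff poly_over_mult poly_over_monom)
    have split: "p = monom c k * q + (p - monom c k * q)" by simp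
    show ?thesis
    proof (cases "p - monom c k * q = 0")
      case True
      then show ?thesis using poly_over_monom[OF c] poly_over_0 split
        by (intro exI[of _ "monom c k"] exI[of _ 0]) simp
    next
      case False
      then obtain s t where st: "poly_over F s" "poly_over F t" "p - monom c k * q = s * q + t"
          "t = 0 \<or> degree t < degree q"
        using less.hyps[OF _ p'] red by blast
      have "p = (s + monom c k) * q + t" using st(3) split by (simp add: algebra_simps)
      then show ?thesis using st poly_over_add poly_over_monom[OF c] by blast
    qed
  qed
qed

lemma poly_over_bezout:
  assumes "poly_over F a" "poly_over F b"
  shows "\<exists>d u v a' b'. poly_over F d \<and> poly_over F a' \<and> poly_over F b' \<and> a = d * a' \<and> b = d * b' \<and>
          u * a + v * b = d \<and> ((a \<noteq> 0 \<or> b \<noteq> 0) \<longrightarrow> d \<noteq> 0)"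
  using assms
proof (induction "if b = 0 then 0 else Suc (degree b)" arbitrary: a b rule: less_induct)
  case less
  show ?case
  proof (cases "b = 0")
    case True
    then show ?thesis using less poly_over_1 poly_over_0
      by (intro exI[of _ a] exI[of _ 1] exI[of _ 0] exI[of _ 1] exI[of _ 0]) auto
  next
    case False
    obtain s t where st: "poly_over F s" "poly_over F t" "a = s * b + t" "t = 0 \<or> degree t < degree b"
      using poly_over_divmod[OF less(2,3) False] by blast
    have "(if t = 0 then 0 else Suc (degree t)) < (if b = 0 then 0 else Suc (degree b))"
      using st(4) False by auto
    from less(1)[OF this less(3) st(2)] obtain d u v b' t' where
      IH: "poly_over F d" "poly_over F b'" "poly_over F t'" "b = d * b'" "t = d * t'" "u * b + v * t = d"
         "(b \<noteq> 0 \<or> t \<noteq> 0) \<longrightarrow> d \<noteq> 0" by blast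
    have "a = d * (s * b' + t')" using st(3) IH(4,5) by (simp add: algebra_simps)
    moreover have "v * a + (u - v * s) * b = d" using st(3) IH(6) by (simp add: algebra_simps)
    moreover have "poly_over F (s * b' + t')" using IH st poly_over_add poly_over_mult by blast
    ultimately show ?thesis using IH False by blast
  qed
qed

lemma poly_over_coprime_rep:
  assumes "poly_over F p" "poly_over F q" "q \<noteq> 0"
  shows "\<exists>p' q'. poly_over F p' \<and> poly_over F q' \<and> q' \<noteq> 0 \<and> Fract p q = Fract p' q' \<and>
           (\<forall>a. poly p' a \<noteq> 0 \<or> poly q' a \<noteq> 0)"
proof -
  obtain d u v p' q' where g: "poly_over F d" "poly_over F p'" "poly_over F q'" "p = d * p'" "q = d * q'"
    "u * p + v * q = d" "d \<noteq> 0" using poly_over_bezout[OF assms(1,2)] assms(3) by blast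
  have "d * (u * p' + v * q') = d * 1" using g(4-6) by (simp add: algebra_simps)
  then have uv: "u * p' + v * q' = 1" using g(7) by (metis mult_cancel_left)
  have q0: "q' \<noteq> 0" using g assms by auto
  have "Fract p q = Fract p' q'" using g(4,5,7) by (simp add: mult_fract_cancel)
  moreover have "poly p' a \<noteq> 0 \<or> poly q' a \<noteq> 0" for a
  proof -
    have "poly u a * poly p' a + poly v a * poly q' a = 1" using arg_cong[OF uv, of "\<lambda>r. poly r a"] by simp
    then show ?thesis by auto
  qed
  ultimately show ?thesis using g q0 by blast
qed

end

lemma coeff_mult_le_sum:
  fixes p q :: "'a::{comm_semiring_0,semiring_no_zero_divisors} poly"
  assumes "degree p \<le> m" "degree q \<le> n"
  shows "coeff (p * q) (m + n) = coeff p m * coeff q n"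
proof (cases "degree p = m \<and> degree q = n")
  case True
  then show ?thesis using coeff_mult_degree_sum by blast
next
  case False
  then have lt: "degree p < m \<or> degree q < n" using assms by auto
  then have "coeff p m * coeff q n = 0" by (auto simp: coeff_eq_0)
  moreover have "degree (p * q) < m + n"
    using degree_mult_le[of p q] lt assms by linarith
  ultimately show ?thesis by (simp add: coeff_eq_0)
qed

lemma Fract_sum: "Fract (sum f A) 1 = (\<Sum>i\<in>A. Fract (f i) (1::'a::idom))"
proof (induct A rule: infinite_finite_induct)
  case (insert x F)
  have "Fract (f x + sum f F) 1 = Fract (f x) 1 + Fract (sum f F) 1" by simp
  then show ?case using insert by simp
qed (simp_all add: fract_collapse)

lemma Fract_power: "Fract (p ^ n) 1 = Fract p (1::'a::idom) ^ n"
proof (induct n)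
  case (Suc n)
  have "Fract (p * p ^ n) 1 = Fract p 1 * Fract (p ^ n) 1" by simp
  then show ?case using Suc by simp
qed (simp add: fract_collapse)

lemma poly_as_sum_upto: "degree p \<le> n \<Longrightarrow> poly p x = (\<Sum>i\<le>n. coeff p i * x ^ i)"
  for p :: "real poly" and x :: real
proof -
  assume d: "degree p \<le> n"
  have "(\<Sum>i\<le>n. coeff p i * x ^ i) = (\<Sum>i\<le>degree p. coeff p i * x ^ i)"
    using d by (intro sum.mono_neutral_right) (auto simp: coeff_eq_0)
  then show ?thesis by (simp add: poly_altdef)
qed

lemma Fract_1_nonzero: "Q \<noteq> 0 \<Longrightarrow> Fract Q (1::'a::idom) \<noteq> 0"
  by (simp add: Zero_fract_def eq_fract)

lemma Fract_poly_expand: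
  fixes p :: "'a::idom poly"
  assumes "degree p \<le> n"
  shows "Fract p 1 = (\<Sum>i\<le>n. Fract [:coeff p i:] 1 * Fract [:0, 1:] 1 ^ i)"
proof -
  have "Fract p 1 = Fract (\<Sum>i\<le>n. monom (coeff p i) i) 1" by (simp add: poly_as_sum_of_monoms' assms)
  also have "\<dots> = (\<Sum>i\<le>n. Fract (monom (coeff p i) i) 1)" by (rule Fract_sum)
  also have "\<dots> = (\<Sum>i\<le>n. Fract [:coeff p i:] 1 * Fract [:0, 1:] 1 ^ i)"
    by (rule sum.cong) (simp_all add: monom_altdef Fract_power[symmetric])
  finally show ?thesis .
qed

section \<open>Places of the rational function field \<open>\<real>(Y)\<close>\<close>

type_synonym RY = "real poly fract"

text \<open>A place of \<open>\<real>(Y)\<close> specified on representatives p/q: \<open>ok p q\<close> says that the value at p/q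
  is finite and \<open>ev p q\<close> is that value.\<close>

definition fract_place ::
    "(real poly \<Rightarrow> real poly \<Rightarrow> bool) \<Rightarrow> (real poly \<Rightarrow> real poly \<Rightarrow> real) \<Rightarrow> RY \<Rightarrow> real option" where
  "fract_place ok ev g = (if \<exists>p q. q \<noteq> 0 \<and> g = Fract p q \<and> ok p q
     then Some (SOME v. \<exists>p q. q \<noteq> 0 \<and> g = Fract p q \<and> ok p q \<and> v = ev p q) else None)"

lemma fract_place_None_iff:
  "fract_place ok ev g = None \<longleftrightarrow> \<not> (\<exists>p q. q \<noteq> 0 \<and> g = Fract p q \<and> ok p q)"
  unfolding fract_place_def by auto

lemma fract_place_None:
  "(\<And>p q. q \<noteq> 0 \<Longrightarrow> g = Fract p q \<Longrightarrow> \<not> ok p q) \<Longrightarrow> fract_place ok ev g = None"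
  using fract_place_None_iff[of ok ev g] by blast

lemma fract_place_SomeE:
  assumes "fract_place ok ev g = Some v"
  obtains p q where "q \<noteq> 0" "g = Fract p q" "ok p q" "v = ev p q"
proof -
  have "\<exists>p q. q \<noteq> 0 \<and> g = Fract p q \<and> ok p q" using assms fract_place_None_iff[of ok ev g] by auto
  then have v: "v = (SOME v. \<exists>p q. q \<noteq> 0 \<and> g = Fract p q \<and> ok p q \<and> v = ev p q)"
    and ex: "\<exists>v p q. q \<noteq> 0 \<and> g = Fract p q \<and> ok p q \<and> v = ev p q"
    using assms by (auto simp: fract_place_def)
  from someI_ex[OF ex] show ?thesis unfolding v[symmetric] using that by blast
qed

context
  fixes ok :: "real poly \<Rightarrow> real poly \<Rightarrow> bool" and ev :: "real poly \<Rightarrow> real poly \<Rightarrow> real"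
  assumes wd: "\<And>p q p' q'. q \<noteq> 0 \<Longrightarrow> q' \<noteq> 0 \<Longrightarrow> ok p q \<Longrightarrow> ok p' q' \<Longrightarrow> p * q' = p' * q \<Longrightarrow>
      ev p q = ev p' q'"
begin

lemma fract_place_eq:
  assumes "q \<noteq> 0" "g = Fract p q" "ok p q"
  shows "fract_place ok ev g = Some (ev p q)"
proof -
  have "fract_place ok ev g \<noteq> None" unfolding fract_place_None_iff using assms by auto
  then obtain v where v: "fract_place ok ev g = Some v" by auto
  then obtain p' q' where "q' \<noteq> 0" "g = Fract p' q'" "ok p' q'" "v = ev p' q'"
    by (rule fract_place_SomeE)
  moreover have "p' * q = p * q'" using \<open>g = Fract p' q'\<close> \<open>q' \<noteq> 0\<close> assms(1,2) by (simp add: eq_fract)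
  ultimately show ?thesis using v wd[of q' q p' p] assms(1,3) by simp
qed

lemma fract_place_add_mult:
  assumes add: "\<And>p1 q1 p2 q2. q1 \<noteq> 0 \<Longrightarrow> q2 \<noteq> 0 \<Longrightarrow> ok p1 q1 \<Longrightarrow> ok p2 q2 \<Longrightarrow>
              ok (p1 * q2 + p2 * q1) (q1 * q2) \<and> ev (p1 * q2 + p2 * q1) (q1 * q2) = ev p1 q1 + ev p2 q2"
    and mult: "\<And>p1 q1 p2 q2. q1 \<noteq> 0 \<Longrightarrow> q2 \<noteq> 0 \<Longrightarrow> ok p1 q1 \<Longrightarrow> ok p2 q2 \<Longrightarrow>
              ok (p1 * p2) (q1 * q2) \<and> ev (p1 * p2) (q1 * q2) = ev p1 q1 * ev p2 q2"
    and u: "fract_place ok ev a = Some u" and v: "fract_place ok ev b = Some v"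
  shows "fract_place ok ev (a + b) = Some (u + v) \<and> fract_place ok ev (a * b) = Some (u * v)"
proof -
  obtain p1 q1 where 1: "q1 \<noteq> 0" "a = Fract p1 q1" "ok p1 q1" "u = ev p1 q1"
    using fract_place_SomeE[OF u] by metis
  obtain p2 q2 where 2: "q2 \<noteq> 0" "b = Fract p2 q2" "ok p2 q2" "v = ev p2 q2"
    using fract_place_SomeE[OF v] by metis
  have "a + b = Fract (p1 * q2 + p2 * q1) (q1 * q2)" "a * b = Fract (p1 * p2) (q1 * q2)"
    using 1 2 by simp_all
  moreover note add[OF 1(1) 2(1) 1(3) 2(3)] mult[OF 1(1) 2(1) 1(3) 2(3)]
  moreover have "q1 * q2 \<noteq> 0" using 1 2 by simp
  ultimately show ?thesis using fract_place_eq[of "q1 * q2"] 1(4) 2(4) by simp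
qed

text \<open>The inverse axiom of a place only needs the valuation-ring dichotomy: every nonzero element
  or its inverse has a representative with finite value, in the latter case the value 0.\<close>

lemma is_place_fract_place:
  assumes add: "\<And>p1 q1 p2 q2. q1 \<noteq> 0 \<Longrightarrow> q2 \<noteq> 0 \<Longrightarrow> ok p1 q1 \<Longrightarrow> ok p2 q2 \<Longrightarrow>
              ok (p1 * q2 + p2 * q1) (q1 * q2) \<and> ev (p1 * q2 + p2 * q1) (q1 * q2) = ev p1 q1 + ev p2 q2"
    and mult: "\<And>p1 q1 p2 q2. q1 \<noteq> 0 \<Longrightarrow> q2 \<noteq> 0 \<Longrightarrow> ok p1 q1 \<Longrightarrow> ok p2 q2 \<Longrightarrow>
              ok (p1 * p2) (q1 * q2) \<and> ev (p1 * p2) (q1 * q2) = ev p1 q1 * ev p2 q2"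
    and one: "ok 1 1" "ev 1 1 = 1"
    and dichotomy: "\<And>p q. p \<noteq> 0 \<Longrightarrow> q \<noteq> 0 \<Longrightarrow>
       (\<exists>p' q'. q' \<noteq> 0 \<and> Fract p q = Fract p' q' \<and> ok p' q') \<or>
       (\<exists>p' q'. q' \<noteq> 0 \<and> Fract q p = Fract p' q' \<and> ok p' q' \<and> ev p' q' = 0)"
  shows "is_place UNIV (fract_place ok ev)"
proof -
  let ?\<psi> = "fract_place ok ev"
  note add_mult = fract_place_add_mult[OF add mult]
  have \<psi>1: "?\<psi> 1 = Some 1" using fract_place_eq[of 1 1 1] one by (simp add: fract_collapse)
  have \<psi>_inverse: "?\<psi> g = None \<longleftrightarrow> ?\<psi> (inverse g) = Some 0" if "g \<noteq> 0" for g
  proof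
    obtain p q where pq: "g = Fract p q" "q \<noteq> 0" by (cases g) auto
    have p0: "p \<noteq> 0" using pq that by (auto simp: fract_collapse)
    assume "?\<psi> g = None"
    then have "\<not> (\<exists>p' q'. q' \<noteq> 0 \<and> Fract p q = Fract p' q' \<and> ok p' q')"
      using pq fract_place_None_iff[of ok ev g] by auto
    then obtain p' q' where "q' \<noteq> 0" "inverse g = Fract p' q'" "ok p' q'" "ev p' q' = 0"
      using dichotomy[OF p0 pq(2)] pq by auto
    then show "?\<psi> (inverse g) = Some 0" using fract_place_eq[of q' "inverse g" p'] by simp
  next
    assume z: "?\<psi> (inverse g) = Some 0"
    show "?\<psi> g = None"
    proof (rule ccontr)
      assume "?\<psi> g \<noteq> None"
      then obtain u where "?\<psi> g = Some u" by auto
      then have "?\<psi> (g * inverse g) = Some (u * 0)" using add_mult z by blast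
      then show False using \<psi>1 that by simp
    qed
  qed
  show ?thesis
    unfolding is_place_def
  proof (intro conjI ballI allI impI)
    fix a b u v assume "?\<psi> a = Some u" "?\<psi> b = Some v"
    then show "?\<psi> (a + b) = Some (u + v)" "?\<psi> (a * b) = Some (u * v)"
      using add_mult by blast+
  qed (use \<psi>1 \<psi>_inverse in auto)
qed

end

definition eval_place :: "real \<Rightarrow> RY \<Rightarrow> real option" where
  "eval_place a = fract_place (\<lambda>p q. poly q a \<noteq> 0) (\<lambda>p q. poly p a / poly q a)"

lemma eval_place_wd:
  fixes p q p' q' :: "real poly"
  assumes "poly q a \<noteq> 0" "poly q' a \<noteq> 0" "p * q' = p' * q"
  shows "poly p a / poly q a = poly p' a / poly q' a"
proof -
  have "poly p a * poly q' a = poly p' a * poly q a"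
    using arg_cong[OF assms(3), of "\<lambda>r. poly r a"] by (metis poly_mult)
  then show ?thesis using assms by (simp add: field_simps)
qed

lemma eval_place_val: "q \<noteq> 0 \<Longrightarrow> poly q a \<noteq> 0 \<Longrightarrow> eval_place a (Fract p q) = Some (poly p a / poly q a)"
  unfolding eval_place_def by (rule fract_place_eq) (auto intro: eval_place_wd)

lemma eval_place_None: "q \<noteq> 0 \<Longrightarrow> poly q a = 0 \<Longrightarrow> poly p a \<noteq> 0 \<Longrightarrow> eval_place a (Fract p q) = None"
  unfolding eval_place_def
proof (rule fract_place_None)
  fix p' q' assume a: "q \<noteq> 0" "poly q a = 0" "poly p a \<noteq> 0" "q' \<noteq> 0" "Fract p q = Fract p' q'"
  then have "p * q' = p' * q" by (simp add: eq_fract)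
  then have "poly p a * poly q' a = poly p' a * poly q a" using arg_cong[of _ _ "\<lambda>r. poly r a"] by (metis poly_mult)
  then show "\<not> poly q' a \<noteq> 0" using a by simp
qed

lemma is_place_eval_place: "is_place UNIV (eval_place a)"
  unfolding eval_place_def
proof (rule is_place_fract_place)
  fix p q :: "real poly" assume p0: "p \<noteq> 0" and q0: "q \<noteq> 0"
  obtain p1 q1 where c: "q1 \<noteq> 0" "Fract p q = Fract p1 q1" "poly p1 a \<noteq> 0 \<or> poly q1 a \<noteq> 0"
    using poly_over_coprime_rep[OF subfield_UNIV, of p q] q0 unfolding poly_over_def by blast
  show "(\<exists>p' q'. q' \<noteq> 0 \<and> Fract p q = Fract p' q' \<and> poly q' a \<noteq> 0) \<or>
        (\<exists>p' q'. q' \<noteq> 0 \<and> Fract q p = Fract p' q' \<and> poly q' a \<noteq> 0 \<and> poly p' a / poly q' a = 0)"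
  proof (cases "poly q1 a = 0")
    case True
    then have "p1 \<noteq> 0" "poly p1 a \<noteq> 0" using c(3) by auto
    moreover have "Fract q p = Fract q1 p1" using c p0 q0 \<open>p1 \<noteq> 0\<close> by (simp add: eq_fract algebra_simps)
    ultimately show ?thesis using True by (intro disjI2 exI[of _ q1] exI[of _ p1]) simp
  next
    case False
    then show ?thesis using c by (intro disjI1 exI[of _ p1] exI[of _ q1]) simp
  qed
next
  fix p q p' q' :: "real poly"
  assume "poly q a \<noteq> 0" "poly q' a \<noteq> 0" "p * q' = p' * q"
  then show "poly p a / poly q a = poly p' a / poly q' a" by (rule eval_place_wd)
next
  fix p1 q1 p2 q2 :: "real poly" assume "poly q1 a \<noteq> 0" "poly q2 a \<noteq> 0"
  then show "poly (q1 * q2) a \<noteq> 0 \<and> poly (p1 * q2 + p2 * q1) a / poly (q1 * q2) a =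
      poly p1 a / poly q1 a + poly p2 a / poly q2 a"
    and "poly (q1 * q2) a \<noteq> 0 \<and> poly (p1 * p2) a / poly (q1 * q2) a =
      poly p1 a / poly q1 a * (poly p2 a / poly q2 a)"
    by (simp_all add: add_divide_distrib)
qed simp_all

definition infinity_place :: "RY \<Rightarrow> real option" where
  "infinity_place = fract_place (\<lambda>p q. degree p \<le> degree q) (\<lambda>p q. coeff p (degree q) / lead_coeff q)"

lemma infinity_place_wd:
  fixes p q p' q' :: "real poly"
  assumes "q \<noteq> 0" "q' \<noteq> 0" "degree p \<le> degree q" "degree p' \<le> degree q'" "p * q' = p' * q"
  shows "coeff p (degree q) / lead_coeff q = coeff p' (degree q') / lead_coeff q'"
proof -
  have "coeff (p * q') (degree q + degree q') = coeff p (degree q) * lead_coeff q'"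
    using coeff_mult_le_sum[of p "degree q" q' "degree q'"] assms by simp
  moreover have "coeff (p' * q) (degree q' + degree q) = coeff p' (degree q') * lead_coeff q"
    using coeff_mult_le_sum[of p' "degree q'" q "degree q"] assms by simp
  ultimately have "coeff p (degree q) * lead_coeff q' = coeff p' (degree q') * lead_coeff q"
    using assms(5) by (simp add: add.commute)
  then show ?thesis using assms by (simp add: field_simps)
qed

lemma infinity_place_val: "q \<noteq> 0 \<Longrightarrow> degree p \<le> degree q \<Longrightarrow>
   infinity_place (Fract p q) = Some (coeff p (degree q) / lead_coeff q)"
  unfolding infinity_place_def by (rule fract_place_eq) (auto intro: infinity_place_wd)

lemma infinity_place_None: "q \<noteq> 0 \<Longrightarrow> degree p > degree q \<Longrightarrow> infinity_place (Fract p q) = None"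
  unfolding infinity_place_def
proof (rule fract_place_None)
  fix p' q' assume a: "q \<noteq> 0" "degree p > degree q" "q' \<noteq> 0" "Fract p q = Fract p' q'"
  then have e: "p * q' = p' * q" by (simp add: eq_fract)
  have p0: "p \<noteq> 0" using a by auto
  show "\<not> degree p' \<le> degree q'"
  proof
    assume d: "degree p' \<le> degree q'"
    have p'0: "p' \<noteq> 0" using e p0 a by auto
    have "degree p + degree q' = degree p' + degree q"
      using arg_cong[OF e, of degree] p0 a p'0 by (simp add: degree_mult_eq)
    then show False using a d by simp
  qed
qed

lemma infinity_place_add_mult:
  fixes p1 q1 p2 q2 :: "real poly"
  assumes q: "q1 \<noteq> 0" "q2 \<noteq> 0" and d: "degree p1 \<le> degree q1" "degree p2 \<le> degree q2"
  defines "ev \<equiv> \<lambda>p q. coeff p (degree q) / lead_coeff q"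
  shows "degree (p1 * q2 + p2 * q1) \<le> degree (q1 * q2) \<and> ev (p1 * q2 + p2 * q1) (q1 * q2) = ev p1 q1 + ev p2 q2"
    and "degree (p1 * p2) \<le> degree (q1 * q2) \<and> ev (p1 * p2) (q1 * q2) = ev p1 q1 * ev p2 q2"
proof -
  have dq: "degree (q1 * q2) = degree q1 + degree q2" using q by (simp add: degree_mult_eq)
  have lq: "lead_coeff (q1 * q2) = lead_coeff q1 * lead_coeff q2" by (simp add: lead_coeff_mult)
  have c1: "coeff (p1 * q2) (degree q1 + degree q2) = coeff p1 (degree q1) * lead_coeff q2"
    using coeff_mult_le_sum[of p1 "degree q1" q2 "degree q2"] d by simp
  have c2: "coeff (p2 * q1) (degree q1 + degree q2) = coeff p2 (degree q2) * lead_coeff q1"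
    using coeff_mult_le_sum[of p2 "degree q2" q1 "degree q1"] d by (simp add: add.commute)
  have c3: "coeff (p1 * p2) (degree q1 + degree q2) = coeff p1 (degree q1) * coeff p2 (degree q2)"
    using coeff_mult_le_sum[of p1 "degree q1" p2 "degree q2"] d by simp
  have "degree (p1 * q2 + p2 * q1) \<le> degree (q1 * q2)"
    using dq d degree_mult_le[of p1 q2] degree_mult_le[of p2 q1] by (intro degree_add_le) auto
  then show "degree (p1 * q2 + p2 * q1) \<le> degree (q1 * q2) \<and> ev (p1 * q2 + p2 * q1) (q1 * q2) = ev p1 q1 + ev p2 q2"
    using c1 c2 q unfolding ev_def dq lq by (simp add: field_simps coeff_mult_degree_sum)
  have "degree (p1 * p2) \<le> degree (q1 * q2)" using dq d degree_mult_le[of p1 p2] by simp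
  then show "degree (p1 * p2) \<le> degree (q1 * q2) \<and> ev (p1 * p2) (q1 * q2) = ev p1 q1 * ev p2 q2"
    using c3 q unfolding ev_def dq lq by (simp add: field_simps coeff_mult_degree_sum)
qed

lemma is_place_infinity_place: "is_place UNIV infinity_place"
  unfolding infinity_place_def
proof (rule is_place_fract_place)
  fix p q :: "real poly" assume p0: "p \<noteq> 0" and q0: "q \<noteq> 0"
  show "(\<exists>p' q'. q' \<noteq> 0 \<and> Fract p q = Fract p' q' \<and> degree p' \<le> degree q') \<or>
        (\<exists>p' q'. q' \<noteq> 0 \<and> Fract q p = Fract p' q' \<and> degree p' \<le> degree q' \<and>
            coeff p' (degree q') / lead_coeff q' = 0)"
  proof (cases "degree p \<le> degree q")
    case False
    then show ?thesis using p0 by (intro disjI2 exI[of _ q] exI[of _ p]) (auto simp: coeff_eq_0)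
  qed (use q0 in \<open>intro disjI1 exI[of _ p] exI[of _ q]; simp\<close>)
next
  fix p q p' q' :: "real poly"
  assume "q \<noteq> 0" "q' \<noteq> 0" "degree p \<le> degree q" "degree p' \<le> degree q'" "p * q' = p' * q"
  then show "coeff p (degree q) / lead_coeff q = coeff p' (degree q') / lead_coeff q'"
    by (rule infinity_place_wd)
qed (use infinity_place_add_mult in simp_all)

definition point_place :: "real option \<Rightarrow> RY \<Rightarrow> real option" where
  "point_place oa = (case oa of Some a \<Rightarrow> eval_place a | None \<Rightarrow> infinity_place)"

lemma is_place_point_place: "is_place UNIV (point_place oa)"
  by (cases oa) (simp_all add: point_place_def is_place_eval_place is_place_infinity_place)


lemma Fbar_Y_iff: "g \<in> Fbar_Y F \<longleftrightarrow> (\<exists>p q. poly_over F p \<and> poly_over F q \<and> q \<noteq> 0 \<and> g = Fract p q)"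
  unfolding Fbar_Y_def poly_over_def by blast

lemma subfield_Fbar_Y: "subfield F \<Longrightarrow> subfield (Fbar_Y F)"
  unfolding Fbar_Y_def
  by (rule subfield_fracts[where P = "poly_over F", unfolded poly_over_def])
    (auto simp: coeff_1 coeff_mult intro!: subfield_0 subfield_1 subfield_add subfield_mult subfield_uminus subfield_sum)

lemma cst_in_Fbar_Y: "subfield F \<Longrightarrow> r \<in> F \<Longrightarrow> cst r \<in> Fbar_Y F"
  unfolding Fbar_Y_iff cst_def by (intro exI[of _ "[:r:]"] exI[of _ 1]) (simp add: poly_over_const poly_over_1)

lemma Y_el_in_Fbar_Y: "subfield F \<Longrightarrow> Y_el \<in> Fbar_Y F"
  unfolding Fbar_Y_iff Y_el_def by (intro exI[of _ "[:0, 1:]"] exI[of _ 1]) (simp add: poly_over_X poly_over_1)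

lemma Fract_1_in_Fbar_Y: "subfield F \<Longrightarrow> poly_over F p \<Longrightarrow> Fract p 1 \<in> Fbar_Y F"
  unfolding Fbar_Y_iff by (intro exI[of _ p] exI[of _ 1]) (simp add: poly_over_1)

lemma Y_el_nonzero: "Y_el \<noteq> 0"
  by (simp add: Y_el_def Zero_fract_def eq_fract)

lemma point_place_cst: "point_place oa (cst r) = Some r"
  by (cases oa) (simp_all add: point_place_def cst_def eval_place_val infinity_place_val)

lemma point_place_Y: "point_place oa Y_el = oa"
  by (cases oa) (simp_all add: point_place_def Y_el_def eval_place_val infinity_place_None)

lemma Fract_Y_expand: "degree p \<le> n \<Longrightarrow> Fract p 1 = (\<Sum>i\<le>n. cst (coeff p i) * Y_el ^ i)"
  unfolding cst_def Y_el_def by (rule Fract_poly_expand)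

lemma Fract_Y_expand_inverse:
  assumes "degree p \<le> n"
  shows "Fract p 1 = Y_el ^ n * (\<Sum>i\<le>n. cst (coeff p i) * inverse Y_el ^ (n - i))"
proof -
  have *: "Y_el ^ n * (cst (coeff p i) * inverse Y_el ^ (n - i)) = cst (coeff p i) * Y_el ^ i"
    if "i \<le> n" for i
  proof -
    have "Y_el ^ n = Y_el ^ i * Y_el ^ (n - i)" using that by (simp flip: power_add)
    then show ?thesis using Y_el_nonzero by (simp add: power_inverse field_simps)
  qed
  have "(\<Sum>i\<le>n. Y_el ^ n * (cst (coeff p i) * inverse Y_el ^ (n - i))) = (\<Sum>i\<le>n. cst (coeff p i) * Y_el ^ i)"
    by (intro sum.cong refl) (simp add: *)
  then show ?thesis using Fract_Y_expand[OF assms] by (simp add: sum_distrib_left)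
qed

locale Fbar_Y_place =
  fixes F :: "real set" and \<psi> :: "RY \<Rightarrow> real option"
  assumes subfield_F: "subfield F" and place_psi: "is_place (Fbar_Y F) \<psi>"
    and psi_cst: "\<And>r. r \<in> F \<Longrightarrow> \<psi> (cst r) = Some r"
begin

lemma subfield_FY: "subfield (Fbar_Y F)"
  using subfield_Fbar_Y[OF subfield_F] .

lemma place_Fract_poly:
  assumes Y: "\<psi> Y_el = Some a" and p: "poly_over F p"
  shows "\<psi> (Fract p 1) = Some (poly p a)"
proof -
  have "\<psi> (\<Sum>i\<le>degree p. cst (coeff p i) * Y_el ^ i) = Some (\<Sum>i\<le>degree p. coeff p i * a ^ i)"
    using p by (intro place_sum[OF place_psi subfield_FY]) (auto simp: poly_over_def psi_cst Y intro!: place_mult[OF place_psi subfield_FY] place_power[OF place_psi subfield_FY]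
      subfield_mult[OF subfield_FY] subfield_power[OF subfield_FY] cst_in_Fbar_Y[OF subfield_F] Y_el_in_Fbar_Y[OF subfield_F])
  then show ?thesis by (simp add: Fract_Y_expand[of p "degree p"] poly_altdef)
qed

lemma place_reversed_poly:
  assumes Y: "\<psi> Y_el = None" and p: "poly_over F p"
  shows "\<psi> (\<Sum>i\<le>n. cst (coeff p i) * inverse Y_el ^ (n - i)) = Some (coeff p n)"
proof -
  have Z: "\<psi> (inverse Y_el) = Some 0" using place_inverse_None[OF place_psi subfield_FY Y_el_in_Fbar_Y[OF subfield_F] Y] .
  have "\<psi> (\<Sum>i\<le>n. cst (coeff p i) * inverse Y_el ^ (n - i)) = Some (\<Sum>i\<le>n. coeff p i * 0 ^ (n - i))"
    using p by (intro place_sum[OF place_psi subfield_FY]) (auto simp: poly_over_def psi_cst Z intro!: place_mult[OF place_psi subfield_FY] place_power[OF place_psi subfield_FY]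
      subfield_mult[OF subfield_FY] subfield_power[OF subfield_FY] cst_in_Fbar_Y[OF subfield_F] Y_el_in_Fbar_Y[OF subfield_F] subfield_inverse[OF subfield_FY])
  moreover have "(\<Sum>i\<le>n. coeff p i * (0::real) ^ (n - i)) = coeff p n"
  proof -
    have "(\<Sum>i\<le>n. coeff p i * (0::real) ^ (n - i)) = (\<Sum>i\<le>n. if i = n then coeff p i else 0)"
      by (rule sum.cong) auto
    then show ?thesis by simp
  qed
  ultimately show ?thesis by simp
qed

lemma reversed_poly_in_Fbar_Y: "poly_over F p \<Longrightarrow> (\<Sum>i\<le>n. cst (coeff p i) * inverse Y_el ^ (n - i)) \<in> Fbar_Y F"
  by (auto simp: poly_over_def intro!: subfield_sum[OF subfield_FY] subfield_mult[OF subfield_FY] subfield_power[OF subfield_FY] cst_in_Fbar_Y[OF subfield_F]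
      Y_el_in_Fbar_Y[OF subfield_F] subfield_inverse[OF subfield_FY])

lemma place_eq_eval_place:
  assumes Y: "\<psi> Y_el = Some a" and g: "g \<in> Fbar_Y F"
  shows "\<psi> g = eval_place a g"
proof -
  obtain p q where pq: "poly_over F p" "poly_over F q" "q \<noteq> 0" "g = Fract p q" using g unfolding Fbar_Y_iff by blast
  from poly_over_coprime_rep[OF subfield_F pq(1,2,3)] obtain p' q' where
    c0: "poly_over F p' \<and> poly_over F q' \<and> q' \<noteq> 0 \<and> Fract p q = Fract p' q' \<and> (\<forall>a. poly p' a \<noteq> 0 \<or> poly q' a \<noteq> 0)"
    by iprover
  then have c: "poly_over F p'" "poly_over F q'" "q' \<noteq> 0" "g = Fract p' q'" "poly p' a \<noteq> 0 \<or> poly q' a \<noteq> 0"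
    using pq(4) by (simp_all only: simp_thms)
  have gg: "g = Fract p' 1 * inverse (Fract q' 1)" using c(3,4) by simp
  have pin: "Fract p' 1 \<in> Fbar_Y F" "Fract q' 1 \<in> Fbar_Y F" using Fract_1_in_Fbar_Y[OF subfield_F] c by auto
  have q'nz: "Fract q' 1 \<noteq> 0" using c(3) by (simp add: Zero_fract_def eq_fract)
  note ep = place_Fract_poly[OF Y c(1)] and eq = place_Fract_poly[OF Y c(2)]
  show ?thesis
  proof (cases "poly q' a = 0")
    case False
    have "\<psi> g = Some (poly p' a * inverse (poly q' a))"
      unfolding gg by (rule place_mult[OF place_psi subfield_FY pin(1) subfield_inverse[OF subfield_FY pin(2)] ep place_inverse[OF place_psi subfield_FY pin(2) eq False]])
    then show ?thesis using eval_place_val[OF c(3) False, of p'] c(4) by (simp add: divide_inverse)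
  next
    case True
    then have pa: "poly p' a \<noteq> 0" using c(5) by simp
    have "\<psi> (inverse (Fract q' 1)) = None" using place_inverse_0[OF place_psi subfield_FY pin(2) q'nz] eq True by simp
    then have "\<psi> g = None" unfolding gg
      by (rule place_mult_None'[OF place_psi subfield_FY pin(1) subfield_inverse[OF subfield_FY pin(2)] ep _ pa])
    then show ?thesis using eval_place_None[OF c(3) True pa] c(4) by simp
  qed
qed

lemma place_eq_infinity_place:
  assumes Y: "\<psi> Y_el = None" and g: "g \<in> Fbar_Y F"
  shows "\<psi> g = infinity_place g"
proof -
  obtain p q where pq: "poly_over F p" "poly_over F q" "q \<noteq> 0" "g = Fract p q" using g unfolding Fbar_Y_iff by blast
  define n where "n = max (degree p) (degree q)"
  define yscaled where "yscaled = (\<Sum>i\<le>n. cst (coeff p i) * inverse Y_el ^ (n - i))"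
  define SQ where "SQ = (\<Sum>i\<le>n. cst (coeff q i) * inverse Y_el ^ (n - i))"
  have eP: "Fract p 1 = Y_el ^ n * yscaled" unfolding yscaled_def by (rule Fract_Y_expand_inverse) (simp add: n_def)
  have eQ: "Fract q 1 = Y_el ^ n * SQ" unfolding SQ_def by (rule Fract_Y_expand_inverse) (simp add: n_def)
  have q1: "Fract q 1 \<noteq> 0" using pq(3) by (simp add: Zero_fract_def eq_fract)
  then have SQ0: "SQ \<noteq> 0" using eQ by auto
  have "g = Fract p 1 * inverse (Fract q 1)" using pq by simp
  also have "\<dots> = yscaled * inverse SQ" using Y_el_nonzero SQ0 unfolding eP eQ by (simp add: field_simps)
  finally have gg: "g = yscaled * inverse SQ" .
  have vP: "\<psi> yscaled = Some (coeff p n)" unfolding yscaled_def by (rule place_reversed_poly[OF Y pq(1)])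
  have vQ: "\<psi> SQ = Some (coeff q n)" unfolding SQ_def by (rule place_reversed_poly[OF Y pq(2)])
  have inP: "yscaled \<in> Fbar_Y F" "SQ \<in> Fbar_Y F" unfolding yscaled_def SQ_def using reversed_poly_in_Fbar_Y pq by auto
  show ?thesis
  proof (cases "degree p \<le> degree q")
    case True
    then have n: "n = degree q" by (simp add: n_def)
    have lq: "coeff q n \<noteq> 0" using pq(3) n by simp
    have "\<psi> g = Some (coeff p n * inverse (coeff q n))"
      unfolding gg by (rule place_mult[OF place_psi subfield_FY inP(1) subfield_inverse[OF subfield_FY inP(2)] vP place_inverse[OF place_psi subfield_FY inP(2) vQ lq]])
    then show ?thesis using infinity_place_val[OF pq(3) True] pq(4) n by (simp add: divide_inverse)
  next
    case False
    then have n: "n = degree p" by (simp add: n_def)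
    have p0: "p \<noteq> 0" using False by auto
    have lp: "coeff p n \<noteq> 0" using p0 n by simp
    have cq: "coeff q n = 0" using False n by (simp add: coeff_eq_0)
    have "\<psi> (inverse SQ) = None" using place_inverse_0[OF place_psi subfield_FY inP(2) SQ0] vQ cq by simp
    then have "\<psi> g = None" unfolding gg
      by (rule place_mult_None'[OF place_psi subfield_FY inP(1) subfield_inverse[OF subfield_FY inP(2)] vP _ lp])
    then show ?thesis using infinity_place_None[OF pq(3)] False pq(4) by simp
  qed
qed

lemma place_eq_point_place: "\<psi> g = (if g \<in> Fbar_Y F then point_place (\<psi> Y_el) g else None)"
proof (cases "g \<in> Fbar_Y F")
  case True
  then show ?thesis using place_eq_eval_place place_eq_infinity_place by (cases "\<psi> Y_el") (simp_all add: point_place_def)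
next
  case False
  then show ?thesis using place_notin[OF place_psi subfield_FY] by simp
qed

end

lemma is_place_point_place_restrict: "subfield F \<Longrightarrow> is_place (Fbar_Y F) (\<lambda>g. if g \<in> Fbar_Y F then point_place oa g else None)"
  by (rule place_restrict[OF is_place_point_place subfield_UNIV subfield_Fbar_Y]) auto

lemma zeta_F_eq:
  assumes "subfield (Fbar R \<xi>)"
  shows "zeta_F R \<xi> \<zeta> = (\<lambda>g. if g \<in> Fbar_Y (Fbar R \<xi>) then point_place (\<zeta> y_el) g else None)"
  unfolding zeta_F_def
proof (rule the_equality)
  show "is_place (Fbar_Y (Fbar R \<xi>)) (\<lambda>g. if g \<in> Fbar_Y (Fbar R \<xi>) then point_place (\<zeta> y_el) g else None) \<and>
    (\<forall>r\<in>Fbar R \<xi>. (if cst r \<in> Fbar_Y (Fbar R \<xi>) then point_place (\<zeta> y_el) (cst r) else None) = Some r) \<and>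
    (if Y_el \<in> Fbar_Y (Fbar R \<xi>) then point_place (\<zeta> y_el) Y_el else None) = \<zeta> y_el"
    using is_place_point_place_restrict[OF assms] cst_in_Fbar_Y[OF assms] Y_el_in_Fbar_Y[OF assms] by (simp add: point_place_cst point_place_Y)
next
  fix \<psi> assume H: "is_place (Fbar_Y (Fbar R \<xi>)) \<psi> \<and> (\<forall>r\<in>Fbar R \<xi>. \<psi> (cst r) = Some r) \<and> \<psi> Y_el = \<zeta> y_el"
  interpret Fbar_Y_place "Fbar R \<xi>" \<psi> using assms H by unfold_locales auto
  show "\<psi> = (\<lambda>g. if g \<in> Fbar_Y (Fbar R \<xi>) then point_place (\<zeta> y_el) g else None)"
    using place_eq_point_place H by (intro ext) simp
qed

section \<open>Neighbourhoods of points of the extended real line\<close>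

text \<open>\<open>ext_nhd oa T\<close>: T is a neighbourhood of oa, where \<open>None\<close> stands for \<infinity>.\<close>

definition ext_nhd :: "real option \<Rightarrow> real set \<Rightarrow> bool" where
  "ext_nhd oa T \<longleftrightarrow> (case oa of Some a \<Rightarrow> \<exists>d>0. \<forall>t. \<bar>t - a\<bar> < d \<longrightarrow> t \<in> T
                            | None \<Rightarrow> \<exists>M. \<forall>t. M < \<bar>t\<bar> \<longrightarrow> t \<in> T)"

lemma ext_nhd_UNIV: "ext_nhd oa UNIV"
  by (cases oa) (auto simp: ext_nhd_def intro: exI[of _ 1])

lemma ext_nhd_Int: "ext_nhd oa T1 \<Longrightarrow> ext_nhd oa T2 \<Longrightarrow> ext_nhd oa (T1 \<inter> T2)"
proof (cases oa)
  case None
  assume "ext_nhd oa T1" "ext_nhd oa T2"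
  then obtain M1 M2 where "\<forall>t. M1 < \<bar>t\<bar> \<longrightarrow> t \<in> T1" "\<forall>t. M2 < \<bar>t\<bar> \<longrightarrow> t \<in> T2"
    using None by (auto simp: ext_nhd_def)
  then have "\<forall>t. max M1 M2 < \<bar>t\<bar> \<longrightarrow> t \<in> T1 \<inter> T2" by auto
  then show ?thesis unfolding ext_nhd_def None option.case by (rule exI)
next
  case (Some a)
  assume "ext_nhd oa T1" "ext_nhd oa T2"
  then obtain d1 d2 where "d1 > 0" "\<forall>t. \<bar>t - a\<bar> < d1 \<longrightarrow> t \<in> T1" "d2 > 0" "\<forall>t. \<bar>t - a\<bar> < d2 \<longrightarrow> t \<in> T2"
    using Some by (auto simp: ext_nhd_def)
  then have "min d1 d2 > 0 \<and> (\<forall>t. \<bar>t - a\<bar> < min d1 d2 \<longrightarrow> t \<in> T1 \<inter> T2)" by auto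
  then show ?thesis unfolding ext_nhd_def Some option.case by (rule exI)
qed

lemma ext_nhd_Inter:
  assumes "finite F" "\<And>s. s \<in> F \<Longrightarrow> \<exists>T. ext_nhd oa T \<and> (\<forall>t\<in>T. Z t \<in> s)"
  shows "\<exists>T. ext_nhd oa T \<and> (\<forall>t\<in>T. Z t \<in> \<Inter>F)"
  using assms
proof (induct F rule: finite_induct)
  case empty
  then show ?case using ext_nhd_UNIV by auto
next
  case (insert s F)
  obtain T1 where T1: "ext_nhd oa T1" "\<forall>t\<in>T1. Z t \<in> s" using insert by blast
  obtain T2 where T2: "ext_nhd oa T2" "\<forall>t\<in>T2. Z t \<in> \<Inter>F" using insert by blast
  show ?case using ext_nhd_Int[OF T1(1) T2(1)] T1(2) T2(2) by (intro exI[of _ "T1 \<inter> T2"]) auto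
qed

lemma ext_nhd_avoid:
  assumes "ext_nhd oa T" "finite S"
  shows "\<exists>t\<in>T. t \<notin> S"
proof -
  have "infinite T"
  proof (cases oa)
    case None
    then obtain M where M: "\<forall>t. M < \<bar>t\<bar> \<longrightarrow> t \<in> T" using assms by (auto simp: ext_nhd_def)
    have "{\<bar>M\<bar><..} \<subseteq> T" using M by auto
    then show ?thesis using infinite_Ioi finite_subset by blast
  next
    case (Some a)
    then obtain d where d: "d > 0" "\<forall>t. \<bar>t - a\<bar> < d \<longrightarrow> t \<in> T" using assms by (auto simp: ext_nhd_def)
    have "{a - d<..<a + d} \<subseteq> T" using d by auto
    moreover have "infinite {a - d<..<a + d}" using d by (intro infinite_Ioo) simp
    ultimately show ?thesis using finite_subset by blast
  qed
  then have "T - S \<noteq> {}" using assms(2) by (metis Diff_infinite_finite finite.emptyI)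
  then show ?thesis by blast
qed

lemma poly_pos_near:
  fixes r :: "real poly"
  assumes "poly r a > 0"
  shows "\<exists>d>0. \<forall>t. \<bar>t - a\<bar> < d \<longrightarrow> poly r t > 0"
proof -
  have "(\<lambda>x. poly r x) \<midarrow>a\<rightarrow> poly r a" using poly_isCont[where p=r and x=a] by (simp add: isCont_def)
  from LIM_D[OF this assms] obtain s where s: "s > 0"
    "\<forall>x. x \<noteq> a \<and> norm (x - a) < s \<longrightarrow> norm (poly r x - poly r a) < poly r a" by blast
  show ?thesis
  proof (intro exI[of _ s] conjI allI impI)
    fix t assume "\<bar>t - a\<bar> < s"
    then show "poly r t > 0" using s(2)[rule_format, of t] assms by (cases "t = a") auto
  qed (rule s(1))
qed

lemma eval_place_pos:
  "q \<noteq> 0 \<Longrightarrow> poly p t * poly q t > 0 \<Longrightarrow> \<exists>w>0. eval_place t (Fract p q) = Some w"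
  using eval_place_val[of q t p] by (auto simp: zero_less_divide_iff zero_less_mult_iff)

lemma eval_place_positive_near:
  assumes "eval_place a g = Some v" "v > 0"
  shows "\<exists>d>0. \<forall>t. \<bar>t - a\<bar> < d \<longrightarrow> (\<exists>w>0. eval_place t g = Some w)"
proof -
  obtain p q where pq: "q \<noteq> 0" "g = Fract p q" "poly q a \<noteq> 0" "v = poly p a / poly q a"
    using assms(1) unfolding eval_place_def by (rule fract_place_SomeE)
  have "poly (p * q) a > 0" using pq assms(2) by (simp add: zero_less_divide_iff zero_less_mult_iff)
  then obtain d where "d > 0" "\<forall>t. \<bar>t - a\<bar> < d \<longrightarrow> poly p t * poly q t > 0"
    using poly_pos_near[of "p * q" a] by auto
  then show ?thesis using eval_place_pos[OF pq(1)] pq(2) by blast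
qed

text \<open>Near \<infinity> the sign of p(t) q(t) is that of the reversed polynomials at 1/t.\<close>

lemma infinity_place_positive_near:
  assumes "infinity_place g = Some v" "v > 0"
  shows "\<exists>M. \<forall>t. M < \<bar>t\<bar> \<longrightarrow> (\<exists>w>0. eval_place t g = Some w)"
proof -
  obtain p q where pq: "q \<noteq> 0" "g = Fract p q" "degree p \<le> degree q" "v = coeff p (degree q) / lead_coeff q"
    using assms(1) unfolding infinity_place_def by (rule fract_place_SomeE)
  have "coeff p (degree q) \<noteq> 0" using pq assms(2) by auto
  then have dpq: "degree p = degree q" using pq(3) by (metis coeff_eq_0 le_neq_implies_less)
  define r where "r = reflect_poly p * reflect_poly q"
  have "poly r 0 = lead_coeff p * lead_coeff q" by (simp add: r_def)
  also have "\<dots> > 0" using pq(4) assms(2) dpq by (simp add: zero_less_divide_iff zero_less_mult_iff)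
  finally obtain d where d: "d > 0" "\<forall>t. \<bar>t - 0\<bar> < d \<longrightarrow> poly r t > 0" using poly_pos_near by blast
  have "poly p t * poly q t > 0" if t: "inverse d < \<bar>t\<bar>" for t
  proof -
    have t0: "t \<noteq> 0" using t d(1) by (metis abs_zero inverse_positive_iff_positive less_asym)
    have "\<bar>inverse t\<bar> < d" using t d(1) t0
      by (metis abs_inverse abs_ge_zero inverse_less_imp_less inverse_inverse_eq)
    then have "poly r (inverse t) > 0" using d(2) by simp
    moreover have "poly r (inverse t) = (inverse t ^ degree p) ^ 2 * (poly p t * poly q t)"
      using t0 dpq by (simp add: r_def poly_reflect_poly_nz power2_eq_square)
    ultimately show ?thesis using t0 by (simp add: zero_less_mult_iff)
  qed
  then show ?thesis using eval_place_pos[OF pq(1)] pq(2) by blast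
qed

lemma point_place_positive_nhd:
  assumes "point_place oa g = Some v" "v > 0"
  shows "ext_nhd oa {t. \<exists>w>0. eval_place t g = Some w}"
  using assms eval_place_positive_near[of _ g v] infinity_place_positive_near[of g v]
  by (cases oa) (auto simp: ext_nhd_def point_place_def)

text \<open>The bumps are \<open>(Y - r1) (r2 - Y)\<close> with rationals \<open>r1 < a < r2\<close> close to a, and
  \<open>(Y\<^sup>2 - m\<^sup>2) / (Y\<^sup>2 + 1)\<close> for \<infinity>.\<close>

lemma positive_bump_finite:
  fixes a d :: real
  assumes S: "subfield R" and d: "d > 0"
  obtains g where "g \<in> Fbar_Y R" "\<exists>v>0. point_place (Some a) g = Some v"
    "\<And>ob v. point_place ob g = Some v \<Longrightarrow> v > 0 \<Longrightarrow> \<exists>t. ob = Some t \<and> \<bar>t - a\<bar> < d"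
proof -
  obtain r1 where r1: "r1 \<in> \<rat>" "a - d < r1" "r1 < a" using Rats_dense_in_real[of "a - d" a] d by auto
  obtain r2 where r2: "r2 \<in> \<rat>" "a < r2" "r2 < a + d" using Rats_dense_in_real[of a "a + d"] d by auto
  have rR: "r1 \<in> R" "r2 \<in> R" using r1(1) r2(1) Rats_subset_subfield[OF S] by auto
  define P where "P = [:- r1, 1:] * [:r2, - 1:]"
  have "poly_over R P" unfolding P_def using rR S
    by (intro poly_over_mult[OF S]) (auto simp: poly_over_def coeff_pCons subfield_0 subfield_1 subfield_uminus split: nat.split)
  then have "Fract P 1 \<in> Fbar_Y R" by (rule Fract_1_in_Fbar_Y[OF S])
  moreover have fin: "point_place (Some t) (Fract P 1) = Some ((t - r1) * (r2 - t))" for t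
    unfolding point_place_def using eval_place_val[of 1 t P] by (simp add: P_def algebra_simps)
  moreover have "point_place None (Fract P 1) = None"
    unfolding point_place_def using infinity_place_None[of 1 P] by (simp add: P_def degree_mult_eq)
  moreover have "\<bar>t - a\<bar> < d" if "(t - r1) * (r2 - t) > 0" for t
    using that r1 r2 by (auto simp: zero_less_mult_iff)
  moreover have "(a - r1) * (r2 - a) > 0" using r1 r2 by simp
  ultimately show ?thesis using that[of "Fract P 1"] by (metis option.exhaust option.inject option.distinct(1))
qed

lemma positive_bump_infinity:
  fixes Mb :: real
  assumes S: "subfield R"
  obtains g where "g \<in> Fbar_Y R" "point_place None g = Some 1"
    "\<And>t v. point_place (Some t) g = Some v \<Longrightarrow> v > 0 \<Longrightarrow> Mb < \<bar>t\<bar>"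
proof -
  define m :: real where "m = of_nat (nat \<lceil>\<bar>Mb\<bar>\<rceil>) + 1"
  have m: "m > \<bar>Mb\<bar>" "m \<ge> 0" unfolding m_def by linarith+
  have mR: "m \<in> R" unfolding m_def using S by (intro subfield_add subfield_of_nat subfield_1)
  define P where "P = [:- (m * m), 0, 1:]"
  define Q :: "real poly" where "Q = [:1, 0, 1:]"
  have "poly_over R P" "poly_over R Q" unfolding P_def Q_def using mR S
    by (auto simp: poly_over_def coeff_pCons subfield_0 subfield_1 subfield_uminus subfield_mult split: nat.split)
  moreover have Q0: "Q \<noteq> 0" by (simp add: Q_def)
  ultimately have "Fract P Q \<in> Fbar_Y R" unfolding Fbar_Y_iff by blast
  moreover have "point_place None (Fract P Q) = Some 1"
    unfolding point_place_def using infinity_place_val[OF Q0, of P] by (simp add: P_def Q_def)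
  moreover have "Mb < \<bar>t\<bar>" if "point_place (Some t) (Fract P Q) = Some v" "v > 0" for t v
  proof -
    have Qt: "poly Q t > 0" by (simp add: Q_def add_pos_nonneg)
    then have "poly P t / poly Q t > 0"
      using that eval_place_val[OF Q0, of t P] by (simp add: point_place_def)
    then have "m * m < \<bar>t\<bar> * \<bar>t\<bar>" using Qt by (simp add: P_def zero_less_divide_iff algebra_simps)
    then have "m < \<bar>t\<bar>" using m(2) by (metis abs_ge_zero mult_mono not_less)
    then show ?thesis using m(1) by linarith
  qed
  ultimately show ?thesis using that by blast
qed


section \<open>The subfields of \<open>\<real>(x, y)\<close>\<close>

abbreviation ypoly :: "real poly \<Rightarrow> real poly poly" where
  "ypoly \<equiv> map_poly (\<lambda>c. [:c:])"

lemma coeff_ypoly: "coeff (ypoly p) i = [:coeff p i:]"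
  by (simp add: coeff_map_poly)

lemma pCons_sum: "[:sum f A:] = (\<Sum>x\<in>A. [:f x:])"
proof (induct A rule: infinite_finite_induct)
  case (insert x F)
  have "[:f x + sum f F:] = [:f x:] + [:sum f F:]" by simp
  then show ?case using insert by simp
qed simp_all

lemma ypoly_add: "ypoly (p + q) = ypoly p + ypoly q"
  by (rule poly_eqI) (simp add: coeff_ypoly)

lemma ypoly_mult: "ypoly (p * q) = ypoly p * ypoly q"
  by (rule poly_eqI) (simp add: coeff_ypoly coeff_mult pCons_sum mult.commute)

lemma ypoly_1: "ypoly 1 = 1"
  by (simp add: pCons_one)

lemma ypoly_eq_0 [simp]: "ypoly p = 0 \<longleftrightarrow> p = 0"
  by (metis coeff_ypoly pCons_eq_0_iff poly_eqI coeff_0 map_poly_0)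

definition embed_RY :: "RY \<Rightarrow> RXY" where
  "embed_RY g = (SOME B. \<exists>p q. q \<noteq> 0 \<and> g = Fract p q \<and> B = Fract (ypoly p) (ypoly q))"

lemma embed_RY_Fract: assumes "q \<noteq> 0" shows "embed_RY (Fract p q) = Fract (ypoly p) (ypoly q)"
proof -
  have ex: "\<exists>B. \<exists>p' q'. q' \<noteq> 0 \<and> Fract p q = Fract p' q' \<and> B = Fract (ypoly p') (ypoly q')"
    using assms by blast
  obtain p' q' where pq: "q' \<noteq> 0" "Fract p q = Fract p' q'" "embed_RY (Fract p q) = Fract (ypoly p') (ypoly q')"
    using someI_ex[OF ex] unfolding embed_RY_def[symmetric] by blast
  have "p * q' = p' * q" using pq assms by (simp add: eq_fract)
  then have "ypoly p * ypoly q' = ypoly p' * ypoly q" by (simp flip: ypoly_mult)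
  then show ?thesis using pq assms by (simp add: eq_fract)
qed

lemma embed_RY_add: "embed_RY (a + b) = embed_RY a + embed_RY b"
  by (cases a, cases b) (simp add: embed_RY_Fract ypoly_add ypoly_mult)

lemma embed_RY_mult: "embed_RY (a * b) = embed_RY a * embed_RY b"
  by (cases a, cases b) (simp add: embed_RY_Fract ypoly_mult)

lemma embed_RY_1: "embed_RY 1 = 1"
  using embed_RY_Fract[of 1 1] by (simp add: ypoly_1 fract_collapse)

lemma embed_RY_0: "embed_RY 0 = 0"
  using embed_RY_Fract[of 1 0] by (simp add: fract_collapse)

lemma embed_RY_inverse: "embed_RY (inverse a) = inverse (embed_RY a)"
proof (cases a)
  case (Fract p q)
  then show ?thesis
    by (cases "p = 0") (simp_all add: embed_RY_Fract fract_collapse embed_RY_0)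
qed

lemma embed_RY_eq_0: "embed_RY a = 0 \<longleftrightarrow> a = 0"
  by (cases a) (simp add: embed_RY_Fract Zero_fract_def eq_fract)

lemma inj_embed_RY: "inj embed_RY"
proof (rule injI)
  fix a b assume "embed_RY a = embed_RY b"
  then have "embed_RY (a + - b) = 0"
    using embed_RY_add[of a "- b"] embed_RY_add[of b "- b"] embed_RY_0 by simp
  then show "a = b" using embed_RY_eq_0[of "a + - b"] by simp
qed

lemma embed_RY_Y: "embed_RY Y_el = y_el"
  by (simp add: Y_el_def y_el_def embed_RY_Fract ypoly_1 map_poly_pCons pCons_one)

lemma embed_RY_cst: "embed_RY (cst r) = constXY r"
  by (simp add: cst_def constXY_def embed_RY_Fract ypoly_1 map_poly_pCons)

definition poly2_over :: "real set \<Rightarrow> real poly poly \<Rightarrow> bool" where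
  "poly2_over R P \<longleftrightarrow> (\<forall>i. poly_over R (coeff P i))"

lemma Rxy_iff: "B \<in> Rxy R \<longleftrightarrow> (\<exists>P Q. poly2_over R P \<and> poly2_over R Q \<and> Q \<noteq> 0 \<and> B = Fract P Q)"
  unfolding Rxy_def poly2_over_def poly_over_def by blast

lemma Rx_iff: "B \<in> Rx R \<longleftrightarrow> (\<exists>p q. poly_over R p \<and> poly_over R q \<and> q \<noteq> 0 \<and> B = Fract [:p:] [:q:])"
  unfolding Rx_def poly_over_def by blast

lemma Ry_iff: "B \<in> Ry R \<longleftrightarrow> (\<exists>p q. poly_over R p \<and> poly_over R q \<and> q \<noteq> 0 \<and> B = Fract (ypoly p) (ypoly q))"
  unfolding Ry_def poly_over_def by blast

lemma Ry_eq_image_embed_RY: "Ry R = embed_RY ` Fbar_Y R"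
proof
  show "Ry R \<subseteq> embed_RY ` Fbar_Y R"
  proof
    fix B assume "B \<in> Ry R"
    then obtain p q where "poly_over R p" "poly_over R q" "q \<noteq> 0" "B = Fract (ypoly p) (ypoly q)"
      unfolding Ry_iff by blast
    then show "B \<in> embed_RY ` Fbar_Y R"
      by (intro image_eqI[of _ _ "Fract p q"]) (auto simp: embed_RY_Fract Fbar_Y_iff)
  qed
  show "embed_RY ` Fbar_Y R \<subseteq> Ry R"
  proof
    fix B assume "B \<in> embed_RY ` Fbar_Y R"
    then obtain g where "g \<in> Fbar_Y R" "B = embed_RY g" by blast
    then obtain p q where "poly_over R p" "poly_over R q" "q \<noteq> 0" "B = embed_RY (Fract p q)"
      unfolding Fbar_Y_iff by blast
    then show "B \<in> Ry R" unfolding Ry_iff by (auto simp: embed_RY_Fract)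
  qed
qed

context fixes R :: "real set" assumes S: "subfield R"
begin

lemma poly_over_sum: "(\<And>i. i \<in> A \<Longrightarrow> poly_over R (f i)) \<Longrightarrow> poly_over R (sum f A)"
  by (induct A rule: infinite_finite_induct) (simp_all add: poly_over_0[OF S] poly_over_add[OF S])

lemma poly2_over_0: "poly2_over R 0"
  by (simp add: poly2_over_def poly_over_0[OF S])

lemma poly2_over_1: "poly2_over R 1"
  by (simp add: poly2_over_def coeff_1 poly_over_0[OF S] poly_over_1[OF S])

lemma poly2_over_add: "poly2_over R P \<Longrightarrow> poly2_over R Q \<Longrightarrow> poly2_over R (P + Q)"
  by (simp add: poly2_over_def poly_over_add[OF S])

lemma poly2_over_uminus: "poly2_over R P \<Longrightarrow> poly2_over R (- P)"
  by (simp add: poly2_over_def poly_over_uminus[OF S])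

lemma poly2_over_mult: "poly2_over R P \<Longrightarrow> poly2_over R Q \<Longrightarrow> poly2_over R (P * Q)"
  by (simp add: poly2_over_def coeff_mult poly_over_sum poly_over_mult[OF S])

lemma poly2_over_const: "poly_over R p \<Longrightarrow> poly2_over R [:p:]"
  by (simp add: poly2_over_def coeff_pCons poly_over_0[OF S] split: nat.split)

lemma poly2_over_X: "poly2_over R [:0, 1:]"
  by (simp add: poly2_over_def coeff_pCons poly_over_0[OF S] poly_over_1[OF S] split: nat.split)

lemma poly2_over_ypoly: "poly_over R p \<Longrightarrow> poly2_over R (ypoly p)"
  unfolding poly2_over_def coeff_ypoly using S by (metis poly_over_const poly_over_def)

lemma subfield_Rxy: "subfield (Rxy R)"
proof -
  have "Rxy R = {Fract P Q | P Q. poly2_over R P \<and> poly2_over R Q \<and> Q \<noteq> 0}"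
    unfolding Rxy_def poly2_over_def poly_over_def by simp
  then show ?thesis
    by (simp add: subfield_fracts poly2_over_0 poly2_over_1 poly2_over_add poly2_over_mult poly2_over_uminus)
qed

lemma subfield_Rx: "subfield (Rx R)"
proof -
  let ?P = "\<lambda>A. \<exists>p. poly_over R p \<and> A = [:p:]"
  have "Rx R = {Fract A B | A B. ?P A \<and> ?P B \<and> B \<noteq> 0}" (is "_ = ?K")
  proof (rule set_eqI)
    fix B show "B \<in> Rx R \<longleftrightarrow> B \<in> ?K"
    proof
      assume "B \<in> Rx R"
      then obtain p q where "poly_over R p" "poly_over R q" "q \<noteq> 0" "B = Fract [:p:] [:q:]"
        unfolding Rx_iff by blast
      then show "B \<in> ?K" by (intro CollectI exI[of _ "[:p:]"] exI[of _ "[:q:]"]) auto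
    next
      assume "B \<in> ?K"
      then obtain p q where "poly_over R p" "poly_over R q" "[:q:] \<noteq> 0" "B = Fract [:p:] [:q:]" by blast
      then show "B \<in> Rx R" unfolding Rx_iff by auto
    qed
  qed
  moreover have "?P 0" "?P 1" using poly_over_0[OF S] poly_over_1[OF S] by (auto simp: pCons_one)
  moreover have "?P (A + B) \<and> ?P (A * B) \<and> ?P (- A)" if A: "?P A" and B: "?P B" for A B
  proof -
    obtain p q where "poly_over R p" "A = [:p:]" "poly_over R q" "B = [:q:]" using A B by blast
    then show ?thesis using poly_over_add[OF S] poly_over_mult[OF S] poly_over_uminus[OF S] by auto
  qed
  ultimately show ?thesis by (simp add: subfield_fracts)
qed

lemma subfield_Ry: "subfield (Ry R)"
  unfolding Ry_eq_image_embed_RY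
  by (rule subfield_image[OF subfield_Fbar_Y[OF S]]) (simp_all add: embed_RY_add embed_RY_mult embed_RY_inverse embed_RY_1)

lemma Rxy_I: "poly2_over R P \<Longrightarrow> poly2_over R Q \<Longrightarrow> Q \<noteq> 0 \<Longrightarrow> Fract P Q \<in> Rxy R"
  unfolding Rxy_iff by blast

lemma Rx_subset_Rxy: "Rx R \<subseteq> Rxy R"
  using Rxy_I poly2_over_const by (auto simp: Rx_iff)

lemma Ry_subset_Rxy: "Ry R \<subseteq> Rxy R"
  using Rxy_I poly2_over_ypoly by (auto simp: Ry_iff)

lemma constXY_Rx: "r \<in> R \<Longrightarrow> constXY r \<in> Rx R"
  using poly_over_const[OF S] poly_over_1[OF S] unfolding Rx_iff constXY_def
  by (intro exI[of _ "[:r:]"] exI[of _ 1]) (simp add: pCons_one)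

lemma constXY_Ry: "r \<in> R \<Longrightarrow> constXY r \<in> Ry R"
  unfolding Ry_eq_image_embed_RY using embed_RY_cst cst_in_Fbar_Y[OF S] by (metis image_eqI)

lemma y_Ry: "y_el \<in> Ry R"
  unfolding Ry_eq_image_embed_RY using embed_RY_Y Y_el_in_Fbar_Y[OF S] by (metis image_eqI)

end

section \<open>The Gauss extension\<close>

lemma Fract_y_expand: "Fract N 1 = (\<Sum>i\<le>degree N. Fract [:coeff N i:] 1 * y_el ^ i)"
  unfolding y_el_def by (rule Fract_poly_expand) simp

definition ycoeff :: "real poly poly \<Rightarrow> nat \<Rightarrow> RXY" where
  "ycoeff P i = Fract [:coeff P i:] 1"

lemma ycoeff_add: "ycoeff (P + Q) i = ycoeff P i + ycoeff Q i"
  by (simp add: ycoeff_def add_pCons)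

lemma ycoeff_mult: "ycoeff (P * Q) k = (\<Sum>i\<le>k. ycoeff P i * ycoeff Q (k - i))"
  by (simp add: ycoeff_def coeff_mult pCons_sum Fract_sum mult.commute)

lemma ycoeff_eq_0: "ycoeff P i = 0 \<longleftrightarrow> coeff P i = 0"
  by (simp add: ycoeff_def Zero_fract_def eq_fract)

lemma ycoeff_beyond: "degree P < i \<Longrightarrow> ycoeff P i = 0"
  by (simp add: ycoeff_eq_0 coeff_eq_0)

lemma ycoeff_Rx: "subfield R \<Longrightarrow> poly2_over R P \<Longrightarrow> ycoeff P i \<in> Rx R"
  unfolding Rx_iff ycoeff_def poly2_over_def
  by (intro exI[of _ "coeff P i"] exI[of _ 1]) (simp add: poly_over_1 pCons_one)

definition yscaled :: "real poly poly \<Rightarrow> RXY \<Rightarrow> RXY" where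
  "yscaled P e = (\<Sum>i\<le>degree P. (ycoeff P i / e) * y_el ^ i)"

lemma Fract_eq_mult_yscaled: "e \<noteq> 0 \<Longrightarrow> Fract P 1 = e * yscaled P e"
  unfolding yscaled_def Fract_y_expand[of P] ycoeff_def[symmetric]
  by (simp add: sum_distrib_left)

locale gauss_setting =
  fixes R :: "real set" and \<xi> :: "RXY \<Rightarrow> real option"
  assumes subfield_R: "subfield R" and place_xi: "is_place (Rx R) \<xi>"
begin

lemma subfield_Rx_R: "subfield (Rx R)" using subfield_Rx[OF subfield_R] .
lemma subfield_Ry_R: "subfield (Ry R)" using subfield_Ry[OF subfield_R] .
lemma subfield_Rxy_R: "subfield (Rxy R)" using subfield_Rxy[OF subfield_R] .
lemma subfield_Fbar_Y_R: "subfield (Fbar_Y R)" using subfield_Fbar_Y[OF subfield_R] .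

text \<open>\<open>reducible P e\<close>: dividing the y-coefficients of P by e lands in the valuation ring of \<xi>;
  \<open>reduct P e\<close> is then the reduction of \<open>P / e\<close>, a polynomial over Fbar.\<close>

definition reducible :: "real poly poly \<Rightarrow> RXY \<Rightarrow> bool" where
  "reducible P e \<longleftrightarrow> poly2_over R P \<and> e \<in> Rx R \<and> e \<noteq> 0 \<and> (\<forall>i. \<xi> (ycoeff P i / e) \<noteq> None)"

definition reduct :: "real poly poly \<Rightarrow> RXY \<Rightarrow> real poly" where
  "reduct P e = (\<Sum>i\<le>degree P. monom (the (\<xi> (ycoeff P i / e))) i)"

lemma coeff_reduct: "coeff (reduct P e) i = the (\<xi> (ycoeff P i / e))"
proof (cases "i \<le> degree P")
  case True
  have "coeff (reduct P e) i = (\<Sum>j\<le>degree P. if j = i then the (\<xi> (ycoeff P j / e)) else 0)"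
    unfolding reduct_def coeff_sum by (intro sum.cong) (auto simp: coeff_monom)
  then show ?thesis using True by simp
next
  case False
  have "coeff (reduct P e) i = (\<Sum>j\<le>degree P. 0)"
    unfolding reduct_def coeff_sum using False by (intro sum.cong) (auto simp: coeff_monom)
  then show ?thesis using False ycoeff_beyond[of P i] place_0[OF place_xi subfield_Rx_R] by simp
qed

lemma degree_reduct: "degree (reduct P e) \<le> degree P"
  unfolding reduct_def by (intro degree_sum_le) (auto simp: degree_monom_le intro: order.trans[OF degree_monom_le])

lemma reducible_ycoeff_Rx: "reducible P e \<Longrightarrow> ycoeff P i / e \<in> Rx R"
  unfolding reducible_def using ycoeff_Rx[OF subfield_R] subfield_divide[OF subfield_Rx_R] by blast

lemma reducible_val: "reducible P e \<Longrightarrow> \<xi> (ycoeff P i / e) = Some (coeff (reduct P e) i)"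
  unfolding coeff_reduct reducible_def by auto

lemma reducible_add:
  assumes "reducible P e" "reducible Q e"
  shows "reducible (P + Q) e \<and> reduct (P + Q) e = reduct P e + reduct Q e"
proof -
  have v: "\<xi> (ycoeff (P + Q) i / e) = Some (coeff (reduct P e) i + coeff (reduct Q e) i)" for i
    using place_add[OF place_xi subfield_Rx_R reducible_ycoeff_Rx[OF assms(1)] reducible_ycoeff_Rx[OF assms(2)] reducible_val[OF assms(1)] reducible_val[OF assms(2)]]
    by (simp add: ycoeff_add add_divide_distrib)
  have "reducible (P + Q) e" using assms v poly2_over_add[OF subfield_R] unfolding reducible_def by auto
  moreover have "reduct (P + Q) e = reduct P e + reduct Q e"
    by (rule poly_eqI) (simp add: coeff_reduct v)
  ultimately show ?thesis by simp
qed

lemma reducible_mult: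
  assumes "reducible P e" "reducible Q f"
  shows "reducible (P * Q) (e * f) \<and> reduct (P * Q) (e * f) = reduct P e * reduct Q f"
proof -
  have ef: "e * f \<in> Rx R" "e * f \<noteq> 0" using assms subfield_mult[OF subfield_Rx_R] unfolding reducible_def by auto
  have v: "\<xi> (ycoeff (P * Q) k / (e * f)) = Some (coeff (reduct P e * reduct Q f) k)" for k
  proof -
    have "ycoeff (P * Q) k / (e * f) = (\<Sum>i\<le>k. (ycoeff P i / e) * (ycoeff Q (k - i) / f))"
      by (simp add: ycoeff_mult sum_divide_distrib)
    moreover have "\<And>i. i \<in> {..k} \<Longrightarrow> (ycoeff P i / e) * (ycoeff Q (k - i) / f) \<in> Rx R \<and>
        \<xi> ((ycoeff P i / e) * (ycoeff Q (k - i) / f)) = Some (coeff (reduct P e) i * coeff (reduct Q f) (k - i))"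
      using subfield_mult[OF subfield_Rx_R reducible_ycoeff_Rx[OF assms(1)] reducible_ycoeff_Rx[OF assms(2)]]
        place_mult[OF place_xi subfield_Rx_R reducible_ycoeff_Rx[OF assms(1)] reducible_ycoeff_Rx[OF assms(2)] reducible_val[OF assms(1)] reducible_val[OF assms(2)]]
      by blast
    then have "\<xi> (\<Sum>i\<le>k. (ycoeff P i / e) * (ycoeff Q (k - i) / f)) =
        Some (\<Sum>i\<le>k. coeff (reduct P e) i * coeff (reduct Q f) (k - i))"
      by (rule place_sum[OF place_xi subfield_Rx_R])
    ultimately show ?thesis by (simp add: coeff_mult)
  qed
  have "reducible (P * Q) (e * f)" using assms ef v poly2_over_mult[OF subfield_R] unfolding reducible_def by auto
  moreover have "reduct (P * Q) (e * f) = reduct P e * reduct Q f"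
    by (rule poly_eqI) (simp add: coeff_reduct v)
  ultimately show ?thesis by simp
qed

lemma reducible_scale:
  assumes "reducible P e" "e' \<in> Rx R" "e' \<noteq> 0" "\<xi> (e / e') = Some s"
  shows "reducible P e' \<and> reduct P e' = smult s (reduct P e)"
proof -
  have ee: "e / e' \<in> Rx R" using assms subfield_divide[OF subfield_Rx_R] unfolding reducible_def by auto
  have v: "\<xi> (ycoeff P i / e') = Some (coeff (reduct P e) i * s)" for i
  proof -
    have e0: "e \<noteq> 0" using assms(1) unfolding reducible_def by simp
    have eq: "ycoeff P i / e' = (ycoeff P i / e) * (e / e')" using e0 by simp
    show ?thesis unfolding eq by (rule place_mult[OF place_xi subfield_Rx_R reducible_ycoeff_Rx[OF assms(1)] ee reducible_val[OF assms(1)] assms(4)])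
  qed
  have "\<forall>i. \<xi> (ycoeff P i / e') \<noteq> None" using v by simp
  moreover have "poly2_over R P" using assms(1) unfolding reducible_def by simp
  ultimately have "reducible P e'" using assms(2,3) unfolding reducible_def by simp
  moreover have "reduct P e' = smult s (reduct P e)" by (rule poly_eqI) (simp add: coeff_reduct v)
  ultimately show ?thesis by simp
qed

lemma exists_reducible_by_ycoeff:
  assumes "poly2_over R P" "P \<noteq> 0"
  shows "\<exists>j. ycoeff P j \<noteq> 0 \<and> reducible P (ycoeff P j) \<and> reduct P (ycoeff P j) \<noteq> 0"
proof -
  have "ycoeff P (degree P) \<noteq> 0" using assms(2) by (simp add: ycoeff_eq_0)
  then obtain j where j: "ycoeff P j \<noteq> 0" and fin: "\<forall>i\<le>degree P. \<xi> (ycoeff P i / ycoeff P j) \<noteq> None"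
    using place_dominant_element[OF place_xi subfield_Rx_R, of "degree P" "ycoeff P"]
      ycoeff_Rx[OF subfield_R assms(1)] by blast
  have "\<xi> (ycoeff P i / ycoeff P j) \<noteq> None" for i
    using fin ycoeff_beyond[of P i] place_0[OF place_xi subfield_Rx_R] by (cases "i \<le> degree P") auto
  then have red: "reducible P (ycoeff P j)"
    unfolding reducible_def using assms j ycoeff_Rx[OF subfield_R assms(1)] by auto
  have "coeff (reduct P (ycoeff P j)) j = 1" using j place_one[OF place_xi subfield_Rx_R] by (simp add: coeff_reduct)
  then show ?thesis using red j by (intro exI[of _ j]) auto
qed

lemma reducible_quotient_finite:
  assumes "reducible A e1" "reducible A e2" "reduct A e2 \<noteq> 0"
  shows "\<xi> (e2 / e1) \<noteq> None"
proof
  assume N: "\<xi> (e2 / e1) = None"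
  have e: "e1 \<in> Rx R" "e1 \<noteq> 0" "e2 \<in> Rx R" "e2 \<noteq> 0" using assms unfolding reducible_def by auto
  have "\<xi> (inverse (e2 / e1)) = Some 0" using place_inverse_None[OF place_xi subfield_Rx_R subfield_divide[OF subfield_Rx_R e(3,1)] N] .
  then have z: "\<xi> (e1 / e2) = Some 0" by simp
  have "coeff (reduct A e2) i = 0" for i
  proof -
    have eq: "ycoeff A i / e2 = (ycoeff A i / e1) * (e1 / e2)" using e by simp
    have "\<xi> (ycoeff A i / e2) = Some (coeff (reduct A e1) i * 0)"
      unfolding eq by (rule place_mult[OF place_xi subfield_Rx_R reducible_ycoeff_Rx[OF assms(1)] subfield_divide[OF subfield_Rx_R e(1,3)] reducible_val[OF assms(1)] z])
    then show ?thesis using reducible_val[OF assms(2)] by simp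
  qed
  then show False using assms(3) by (simp add: poly_eq_iff)
qed

lemma reducible_1: "reducible 1 1 \<and> reduct 1 1 = 1"
proof -
  have c: "ycoeff 1 i = (if i = 0 then 1 else 0)" for i by (simp add: ycoeff_def coeff_1 pCons_one fract_collapse)
  have "reducible 1 1" unfolding reducible_def using c place_0[OF place_xi subfield_Rx_R] place_one[OF place_xi subfield_Rx_R] subfield_1[OF subfield_Rx_R] poly2_over_1[OF subfield_R] by auto
  moreover have "reduct 1 1 = 1" unfolding reduct_def using c place_one[OF place_xi subfield_Rx_R] by simp
  ultimately show ?thesis by simp
qed

text \<open>\<open>gauss_repr B N D e\<close>: B = N/D where a common e brings the y-coefficients of N and D into
  the valuation ring of \<xi> without reducing D to zero; the value of \<xi>_y at B is then the quotient
  of the reductions.\<close>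

definition gauss_repr :: "RXY \<Rightarrow> real poly poly \<Rightarrow> real poly poly \<Rightarrow> RXY \<Rightarrow> bool" where
  "gauss_repr B N D e \<longleftrightarrow> D \<noteq> 0 \<and> B = Fract N D \<and> reducible N e \<and> reducible D e \<and> reduct D e \<noteq> 0"

definition gauss_place :: "RXY \<Rightarrow> RY option" where
  "gauss_place B = (if \<exists>N D e. gauss_repr B N D e
     then Some (SOME g. \<exists>N D e. gauss_repr B N D e \<and> g = Fract (reduct N e) (reduct D e)) else None)"

lemma gauss_repr_unique:
  assumes "gauss_repr B N D e" "gauss_repr B N' D' e'"
  shows "Fract (reduct N e) (reduct D e) = Fract (reduct N' e') (reduct D' e')"
proof -
  have a: "D \<noteq> 0" "B = Fract N D" "reducible N e" "reducible D e" "reduct D e \<noteq> 0"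
    using assms(1) by (auto simp: gauss_repr_def)
  have b: "D' \<noteq> 0" "B = Fract N' D'" "reducible N' e'" "reducible D' e'" "reduct D' e' \<noteq> 0"
    using assms(2) by (auto simp: gauss_repr_def)
  have eq: "N * D' = N' * D" using a(1,2) b(1,2) by (simp add: eq_fract)
  have "reduct (N * D') (e * e') = reduct N e * reduct D' e'" using reducible_mult[OF a(3) b(4)] by simp
  moreover have "reduct (N' * D) (e' * e) = reduct N' e' * reduct D e" using reducible_mult[OF b(3) a(4)] by simp
  ultimately have "reduct N e * reduct D' e' = reduct N' e' * reduct D e" using eq by (simp add: mult.commute)
  then show ?thesis using a(5) b(5) by (simp add: eq_fract)
qed

lemma gauss_place_None: "\<not> (\<exists>N D e. gauss_repr B N D e) \<Longrightarrow> gauss_place B = None"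
  unfolding gauss_place_def by simp

lemma gauss_place_SomeE:
  assumes "gauss_place B = Some g"
  obtains N D e where "gauss_repr B N D e" "g = Fract (reduct N e) (reduct D e)"
proof -
  have "\<exists>N D e. gauss_repr B N D e" using assms gauss_place_None by fastforce
  then have g: "g = (SOME g. \<exists>N D e. gauss_repr B N D e \<and> g = Fract (reduct N e) (reduct D e))"
    and ex: "\<exists>g N D e. gauss_repr B N D e \<and> g = Fract (reduct N e) (reduct D e)"
    using assms by (auto simp: gauss_place_def)
  from someI_ex[OF ex] show ?thesis unfolding g[symmetric] using that by blast
qed

lemma gauss_place_eq: "gauss_repr B N D e \<Longrightarrow> gauss_place B = Some (Fract (reduct N e) (reduct D e))"
proof -
  assume r: "gauss_repr B N D e"
  then have "gauss_place B \<noteq> None" unfolding gauss_place_def by auto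
  then obtain g where g: "gauss_place B = Some g" by auto
  then show ?thesis using gauss_repr_unique[OF r] by (metis gauss_place_SomeE)
qed

lemma gauss_repr_Rxy: "gauss_repr B N D e \<Longrightarrow> B \<in> Rxy R"
  unfolding gauss_repr_def reducible_def using Rxy_I[OF subfield_R] by auto

lemma Rxy_reducible_Fract:
  assumes "B \<in> Rxy R" "B \<noteq> 0"
  obtains N D eN eD where "poly2_over R N" "N \<noteq> 0" "poly2_over R D" "D \<noteq> 0" "B = Fract N D"
    "reducible N eN" "reduct N eN \<noteq> 0" "reducible D eD" "reduct D eD \<noteq> 0"
proof -
  obtain N D where nd: "poly2_over R N" "poly2_over R D" "D \<noteq> 0" "B = Fract N D"
    using assms(1) unfolding Rxy_iff by blast
  have "N \<noteq> 0" using nd assms(2) by (auto simp: fract_collapse)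
  then show ?thesis
    using that nd exists_reducible_by_ycoeff[OF nd(1)] exists_reducible_by_ycoeff[OF nd(2,3)] by blast
qed

text \<open>If \<xi>(eN/eD) is infinite, no representation of N/D with a common divisor exists, because
  comparing it with eN, eD would make that quotient finite.\<close>

lemma gauss_place_Fract:
  assumes N: "poly2_over R N" "N \<noteq> 0" and D: "poly2_over R D" "D \<noteq> 0"
    and eN: "reducible N eN" "reduct N eN \<noteq> 0" and eD: "reducible D eD" "reduct D eD \<noteq> 0"
  shows "gauss_place (Fract N D) = (case \<xi> (eN / eD) of None \<Rightarrow> None
            | Some s \<Rightarrow> Some (Fract (smult s (reduct N eN)) (reduct D eD)))"
proof (cases "\<xi> (eN / eD)")
  case (Some s)
  have e: "eD \<in> Rx R" "eD \<noteq> 0" using eD unfolding reducible_def by auto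
  have vs: "reducible N eD \<and> reduct N eD = smult s (reduct N eN)" using reducible_scale[OF eN(1) e Some] .
  have "gauss_repr (Fract N D) N D eD" unfolding gauss_repr_def using D vs eD by auto
  then show ?thesis using gauss_place_eq Some vs by simp
next
  case None
  have "\<not> gauss_repr (Fract N D) N' D' e'" for N' D' e'
  proof
    assume "gauss_repr (Fract N D) N' D' e'"
    then have b: "D' \<noteq> 0" "Fract N D = Fract N' D'" "reducible N' e'" "reducible D' e'" "reduct D' e' \<noteq> 0"
      by (auto simp: gauss_repr_def)
    have eq: "N * D' = N' * D" using b(1,2) D(2) by (simp add: eq_fract)
    have v1: "reducible (N * D') (eN * e')" "reduct (N * D') (eN * e') = reduct N eN * reduct D' e'"
      using reducible_mult[OF eN(1) b(4)] by auto
    have v2: "reducible (N * D') (e' * eD)" using reducible_mult[OF b(3) eD(1)] eq by simp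
    have "reduct (N * D') (eN * e') \<noteq> 0" using v1(2) eN(2) b(5) by simp
    from reducible_quotient_finite[OF v2 v1(1) this] have "\<xi> (eN * e' / (e' * eD)) \<noteq> None" .
    moreover have "e' \<noteq> 0" using b(3) unfolding reducible_def by auto
    ultimately show False using None by (simp add: mult.commute)
  qed
  then show ?thesis using None gauss_place_None by simp
qed

lemma gauss_place_add_mult:
  assumes u: "gauss_place a = Some u" and v: "gauss_place b = Some v"
  shows "gauss_place (a + b) = Some (u + v) \<and> gauss_place (a * b) = Some (u * v)"
proof -
  obtain N1 D1 e1 where 1: "gauss_repr a N1 D1 e1" "u = Fract (reduct N1 e1) (reduct D1 e1)"
    using gauss_place_SomeE[OF u] by blast
  obtain N2 D2 e2 where 2: "gauss_repr b N2 D2 e2" "v = Fract (reduct N2 e2) (reduct D2 e2)"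
    using gauss_place_SomeE[OF v] by blast
  have r1: "D1 \<noteq> 0" "a = Fract N1 D1" "reducible N1 e1" "reducible D1 e1" "reduct D1 e1 \<noteq> 0"
    using 1 by (auto simp: gauss_repr_def)
  have r2: "D2 \<noteq> 0" "b = Fract N2 D2" "reducible N2 e2" "reducible D2 e2" "reduct D2 e2 \<noteq> 0"
    using 2 by (auto simp: gauss_repr_def)
  note m1 = reducible_mult[OF r1(3) r2(4)] and m2 = reducible_mult[OF r2(3) r1(4)]
    and m3 = reducible_mult[OF r1(4) r2(4)] and m4 = reducible_mult[OF r1(3) r2(3)]
  have ad: "reducible (N1 * D2 + N2 * D1) (e1 * e2)"
     "reduct (N1 * D2 + N2 * D1) (e1 * e2) = reduct N1 e1 * reduct D2 e2 + reduct N2 e2 * reduct D1 e1"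
    using reducible_add[of "N1 * D2" "e1 * e2" "N2 * D1"] m1 m2 by (auto simp: mult.commute)
  have "gauss_repr (a + b) (N1 * D2 + N2 * D1) (D1 * D2) (e1 * e2)"
    unfolding gauss_repr_def using ad m3 r1 r2 by simp
  then have "gauss_place (a + b) = Some (u + v)"
    using gauss_place_eq ad(2) m3 1(2) 2(2) r1(5) r2(5) by (simp add: mult.commute)
  moreover have "gauss_repr (a * b) (N1 * N2) (D1 * D2) (e1 * e2)"
    unfolding gauss_repr_def using m4 m3 r1 r2 by simp
  then have "gauss_place (a * b) = Some (u * v)"
    using gauss_place_eq m4 m3 1(2) 2(2) by simp
  ultimately show ?thesis ..
qed

lemma gauss_place_inverse:
  assumes "B \<in> Rxy R" "B \<noteq> 0"
  shows "gauss_place B = None \<longleftrightarrow> gauss_place (inverse B) = Some 0"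
proof -
  obtain N D eN eD where nd: "poly2_over R N" "N \<noteq> 0" "poly2_over R D" "D \<noteq> 0" "B = Fract N D"
    and eN: "reducible N eN" "reduct N eN \<noteq> 0" and eD: "reducible D eD" "reduct D eD \<noteq> 0"
    using Rxy_reducible_Fract[OF assms] .
  have f1: "gauss_place B = (case \<xi> (eN / eD) of None \<Rightarrow> None
      | Some s \<Rightarrow> Some (Fract (smult s (reduct N eN)) (reduct D eD)))"
    unfolding nd(5) by (rule gauss_place_Fract[OF nd(1-4) eN eD])
  have "inverse B = Fract D N" using nd(5) by simp
  then have f2: "gauss_place (inverse B) = (case \<xi> (inverse (eN / eD)) of None \<Rightarrow> None
      | Some s \<Rightarrow> Some (Fract (smult s (reduct D eD)) (reduct N eN)))"
    using gauss_place_Fract[OF nd(3,4,1,2) eD eN] by simp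
  have q: "eN / eD \<in> Rx R" "eN / eD \<noteq> 0"
    using eN(1) eD(1) subfield_divide[OF subfield_Rx_R] unfolding reducible_def by auto
  show ?thesis
  proof (cases "\<xi> (eN / eD)")
    case None
    then show ?thesis
      unfolding f1 f2 using place_inverse_None[OF place_xi subfield_Rx_R q(1)] by (simp add: fract_collapse)
  next
    case (Some s)
    show ?thesis
    proof (cases "s = 0")
      case True
      then show ?thesis unfolding f1 f2 using place_inverse_0[OF place_xi subfield_Rx_R q] Some by simp
    next
      case False
      have "Fract (smult (inverse s) (reduct D eD)) (reduct N eN) \<noteq> 0"
        using False eD(2) eN(2) by (simp add: Zero_fract_def eq_fract)
      then show ?thesis
        unfolding f1 f2 using place_inverse[OF place_xi subfield_Rx_R q(1) Some False] Some by simp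
    qed
  qed
qed

lemma is_place_gauss_place: "is_place (Rxy R) gauss_place"
  unfolding is_place_def
proof (intro conjI ballI allI impI)
  show "gauss_place B = None" if "B \<notin> Rxy R" for B
    using that gauss_repr_Rxy gauss_place_None by blast
  have "gauss_repr 1 1 1 1" unfolding gauss_repr_def using reducible_1 by (simp add: fract_collapse)
  from gauss_place_eq[OF this] show "gauss_place 1 = Some 1" using reducible_1 by (simp add: fract_collapse)
qed (use gauss_place_add_mult gauss_place_inverse in blast)+


lemma Fbar_iff: "r \<in> Fbar R \<xi> \<longleftrightarrow> (\<exists>a\<in>Rx R. \<xi> a = Some r)"
  by (simp add: Fbar_def)

lemma subfield_Fbar: "subfield (Fbar R \<xi>)"
  unfolding Fbar_def using subfield_place_values[OF place_xi subfield_Rx_R] by simp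

lemma reduct_poly_over_Fbar: "reducible N e \<Longrightarrow> poly_over (Fbar R \<xi>) (reduct N e)"
  unfolding poly_over_def Fbar_iff using reducible_val reducible_ycoeff_Rx by metis

lemma gauss_place_in_Fbar_Y: "gauss_place B = Some g \<Longrightarrow> g \<in> Fbar_Y (Fbar R \<xi>)"
proof -
  assume "gauss_place B = Some g"
  then obtain N D e where r: "gauss_repr B N D e" "g = Fract (reduct N e) (reduct D e)" by (rule gauss_place_SomeE)
  then have "reducible N e" "reducible D e" "reduct D e \<noteq> 0" unfolding gauss_repr_def by auto
  then show ?thesis unfolding Fbar_Y_iff r(2) using reduct_poly_over_Fbar
    by (intro exI[of _ "reduct N e"] exI[of _ "reduct D e"]) simp
qed

lemma ycoeff_const: "ycoeff [:p:] i = (if i = 0 then Fract [:p:] 1 else 0)"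
  by (simp add: ycoeff_def coeff_pCons fract_collapse split: nat.split)

lemma gauss_place_Rx:
  assumes c: "c \<in> Rx R" "\<xi> c = Some s"
  shows "gauss_place c = Some (cst s)"
proof -
  obtain p q where pq: "poly_over R p" "poly_over R q" "q \<noteq> 0" "c = Fract [:p:] [:q:]" using c(1) unfolding Rx_iff by blast
  define e :: RXY where "e = Fract [:q:] 1"
  have e0: "e \<noteq> 0" using pq(3) by (simp add: e_def Zero_fract_def eq_fract)
  have eR: "e \<in> Rx R" using ycoeff_Rx[OF subfield_R poly2_over_const[OF subfield_R pq(2)], of 0] by (simp add: e_def ycoeff_def)
  have ce: "Fract [:p:] 1 / e = c" using pq(3,4) by (simp add: e_def)
  have v1: "\<xi> (ycoeff [:p:] i / e) = (if i = 0 then Some s else Some 0)" for i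
    using ce c(2) place_0[OF place_xi subfield_Rx_R] by (simp add: ycoeff_const)
  have v2: "\<xi> (ycoeff [:q:] i / e) = (if i = 0 then Some 1 else Some 0)" for i
    using e0 place_0[OF place_xi subfield_Rx_R] place_one[OF place_xi subfield_Rx_R] by (simp add: ycoeff_const e_def)
  have va: "reducible [:p:] e" "reducible [:q:] e"
    unfolding reducible_def using v1 v2 e0 eR poly2_over_const[OF subfield_R] pq by auto
  have G1: "reduct [:p:] e = [:s:]" unfolding reduct_def using v1[of 0] by (simp add: monom_0)
  have G2: "reduct [:q:] e = 1" unfolding reduct_def using v2[of 0] by (simp add: pCons_one)
  have "gauss_repr c [:p:] [:q:] e" unfolding gauss_repr_def using pq va G2 by simp
  from gauss_place_eq[OF this] show ?thesis unfolding G1 G2 by (simp add: cst_def)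
qed

lemma gauss_place_y: "gauss_place y_el = Some Y_el"
proof -
  define N :: "real poly poly" where "N = [:0, 1:]"
  have cN: "ycoeff N i = (if i = 1 then 1 else 0)" for i
    by (simp add: N_def ycoeff_def coeff_pCons fract_collapse pCons_one split: nat.split)
  have v: "\<xi> (ycoeff N i / 1) = (if i = 1 then Some 1 else Some 0)" for i
    using place_0[OF place_xi subfield_Rx_R] place_one[OF place_xi subfield_Rx_R] by (simp add: cN)
  have va: "reducible N 1" unfolding reducible_def using v subfield_1[OF subfield_Rx_R] poly2_over_X[OF subfield_R] by (auto simp: N_def)
  have dN: "degree N = 1" by (simp add: N_def)
  have GN: "reduct N 1 = [:0, 1:]" unfolding reduct_def dN using v by (simp add: monom_altdef numeral_2_eq_2)
  have "gauss_repr y_el N 1 1" unfolding gauss_repr_def using va reducible_1 by (simp add: N_def y_el_def)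
  from gauss_place_eq[OF this] show ?thesis unfolding GN using reducible_1 by (simp add: Y_el_def)
qed

lemma reducibleD: "reducible P e \<Longrightarrow> e \<in> Rx R \<and> e \<noteq> 0 \<and> poly2_over R P"
  by (simp add: reducible_def)

lemma yscaled_Rxy: "reducible N e \<Longrightarrow> yscaled N e \<in> Rxy R"
  unfolding yscaled_def using y_Ry[OF subfield_R] Ry_subset_Rxy[OF subfield_R] Rx_subset_Rxy[OF subfield_R] reducible_ycoeff_Rx
  by (intro subfield_sum[OF subfield_Rxy_R] subfield_mult[OF subfield_Rxy_R] subfield_power[OF subfield_Rxy_R]) auto

lemma Fract_eq_yscaled_quotient:
  assumes "D \<noteq> 0" "eN \<noteq> 0" "eD \<noteq> 0"
  shows "Fract N D = (eN / eD) * (yscaled N eN / yscaled D eD)"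
proof -
  have "Fract N D = Fract N 1 / Fract D 1" using assms(1) by simp
  also have "\<dots> = (eN * yscaled N eN) / (eD * yscaled D eD)"
    using Fract_eq_mult_yscaled[OF assms(2)] Fract_eq_mult_yscaled[OF assms(3)] by simp
  finally show ?thesis by simp
qed

context
  fixes \<Phi> :: "RXY \<Rightarrow> RY option"
  assumes gauss_ext: "is_gauss_ext R \<xi> \<Phi>"
begin

lemma gauss_ext_place: "is_place (Rxy R) \<Phi>"
  using gauss_ext unfolding is_gauss_ext_def by simp

lemma gauss_ext_sum: "\<forall>i\<le>n. c i \<in> Rx R \<and> \<xi> (c i) \<noteq> None \<Longrightarrow>
    \<Phi> (\<Sum>i\<le>n. c i * y_el ^ i) = Some (\<Sum>i\<le>n. cst (the (\<xi> (c i))) * Y_el ^ i)"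
  using gauss_ext unfolding is_gauss_ext_def by blast

lemma gauss_ext_yscaled:
  assumes v: "reducible P e"
  shows "\<Phi> (yscaled P e) = Some (Fract (reduct P e) 1)"
proof -
  have "\<Phi> (yscaled P e) = Some (\<Sum>i\<le>degree P. cst (the (\<xi> (ycoeff P i / e))) * Y_el ^ i)"
    unfolding yscaled_def
    using reducible_ycoeff_Rx[OF v] reducible_val[OF v] by (intro gauss_ext_sum) auto
  also have "(\<Sum>i\<le>degree P. cst (the (\<xi> (ycoeff P i / e))) * Y_el ^ i) = Fract (reduct P e) 1"
    using Fract_Y_expand[OF degree_reduct[of P e]] unfolding coeff_reduct by (rule sym)
  finally show ?thesis .
qed

lemma gauss_ext_Rx: "c \<in> Rx R \<Longrightarrow> \<Phi> c = map_option cst (\<xi> c)"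
proof (cases "\<xi> c")
  case None
  assume c: "c \<in> Rx R"
  have ic: "inverse c \<in> Rx R" "c \<noteq> 0"
    using c None subfield_inverse[OF subfield_Rx_R] place_None_nz[OF place_xi subfield_Rx_R] by auto
  have "\<xi> (inverse c) = Some 0" using place_inverse_None[OF place_xi subfield_Rx_R c None] .
  then have "\<Phi> (inverse c) = Some 0"
    using gauss_ext_sum[of 0 "\<lambda>_. inverse c"] ic by (simp add: cst_def fract_collapse)
  then show ?thesis
    using place_inverse_0[OF gauss_ext_place subfield_Rxy_R, of "inverse c"] ic None
      Rx_subset_Rxy[OF subfield_R] subfield_inverse[OF subfield_Rxy_R] by auto
next
  case (Some s)
  assume "c \<in> Rx R"
  then show ?thesis using gauss_ext_sum[of 0 "\<lambda>_. c"] Some by simp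
qed

lemma gauss_ext_Fract:
  assumes N: "poly2_over R N" "N \<noteq> 0" and D: "poly2_over R D" "D \<noteq> 0"
    and eN: "reducible N eN" "reduct N eN \<noteq> 0" and eD: "reducible D eD" "reduct D eD \<noteq> 0"
  shows "\<Phi> (Fract N D) = (case \<xi> (eN / eD) of None \<Rightarrow> None
            | Some s \<Rightarrow> Some (Fract (smult s (reduct N eN)) (reduct D eD)))"
proof -
  note P = gauss_ext_place
  have e: "eN \<in> Rx R" "eN \<noteq> 0" "eD \<in> Rx R" "eD \<noteq> 0" using reducibleD[OF eN(1)] reducibleD[OF eD(1)] by auto
  have dec: "Fract N D = (eN / eD) * (yscaled N eN / yscaled D eD)"
    using Fract_eq_yscaled_quotient[OF D(2) e(2) e(4)] .
  have inS: "yscaled N eN \<in> Rxy R" "yscaled D eD \<in> Rxy R" using yscaled_Rxy eN(1) eD(1) by auto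
  have w: "\<Phi> (yscaled N eN / yscaled D eD) = Some (Fract (reduct N eN) (reduct D eD))"
    using place_divide[OF P subfield_Rxy_R inS gauss_ext_yscaled[OF eN(1)] gauss_ext_yscaled[OF eD(1)]
        Fract_1_nonzero[OF eD(2)]] eD(2) by simp
  have wR: "yscaled N eN / yscaled D eD \<in> Rxy R" using subfield_divide[OF subfield_Rxy_R inS] .
  have wnz: "Fract (reduct N eN) (reduct D eD) \<noteq> 0" using eN(2) eD(2) by (simp add: Zero_fract_def eq_fract)
  have q: "eN / eD \<in> Rx R" using e subfield_divide[OF subfield_Rx_R] by auto
  have qR: "eN / eD \<in> Rxy R" using q Rx_subset_Rxy[OF subfield_R] by auto
  show ?thesis
  proof (cases "\<xi> (eN / eD)")
    case (Some s)
    have "\<Phi> (eN / eD) = Some (cst s)" using gauss_ext_Rx[OF q] Some by simp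
    from place_mult[OF P subfield_Rxy_R qR wR this w] show ?thesis
      unfolding dec using Some by (simp add: cst_def)
  next
    case None
    have "\<Phi> (eN / eD) = None" using gauss_ext_Rx[OF q] None by simp
    from place_mult_None[OF P subfield_Rxy_R qR wR this w wnz] show ?thesis
      unfolding dec using None by simp
  qed
qed

end

lemma is_gauss_ext_gauss_place: "is_gauss_ext R \<xi> gauss_place"
  unfolding is_gauss_ext_def
proof (intro conjI allI impI)
  show "is_place (Rxy R) gauss_place" by (rule is_place_gauss_place)
  show "the (gauss_place a) \<in> Fbar_Y (Fbar R \<xi>)" if "gauss_place a \<noteq> None" for a
    using that gauss_place_in_Fbar_Y by auto
next
  fix c :: "nat \<Rightarrow> RXY" and n assume H: "\<forall>i\<le>n. c i \<in> Rx R \<and> \<xi> (c i) \<noteq> None"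
  have yR: "y_el \<in> Rxy R" using y_Ry[OF subfield_R] Ry_subset_Rxy[OF subfield_R] by auto
  show "gauss_place (\<Sum>i\<le>n. c i * y_el ^ i) = Some (\<Sum>i\<le>n. cst (the (\<xi> (c i))) * Y_el ^ i)"
  proof (rule place_sum[OF is_place_gauss_place subfield_Rxy_R])
    fix i assume "i \<in> {..n}"
    then have ci: "c i \<in> Rx R" "\<xi> (c i) = Some (the (\<xi> (c i)))" using H by auto
    have ciR: "c i \<in> Rxy R" using ci(1) Rx_subset_Rxy[OF subfield_R] by auto
    show "c i * y_el ^ i \<in> Rxy R \<and> gauss_place (c i * y_el ^ i) = Some (cst (the (\<xi> (c i))) * Y_el ^ i)"
      using subfield_mult[OF subfield_Rxy_R ciR subfield_power[OF subfield_Rxy_R yR]]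
        place_mult[OF is_place_gauss_place subfield_Rxy_R ciR subfield_power[OF subfield_Rxy_R yR]
          gauss_place_Rx[OF ci] place_power[OF is_place_gauss_place subfield_Rxy_R yR gauss_place_y]]
      by simp
  qed
qed

lemma gauss_ext_unique:
  assumes \<Phi>: "is_gauss_ext R \<xi> \<Phi>"
  shows "\<Phi> = gauss_place"
proof
  fix B
  note P = gauss_ext_place[OF \<Phi>] and G = is_place_gauss_place
  show "\<Phi> B = gauss_place B"
  proof (cases "B \<in> Rxy R \<and> B \<noteq> 0")
    case True
    then have "B \<in> Rxy R" "B \<noteq> 0" by auto
    then obtain N D eN eD where "poly2_over R N" "N \<noteq> 0" "poly2_over R D" "D \<noteq> 0" "B = Fract N D"
      and "reducible N eN" "reduct N eN \<noteq> 0" "reducible D eD" "reduct D eD \<noteq> 0"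
      by (rule Rxy_reducible_Fract)
    then show ?thesis
      using gauss_ext_Fract[OF \<Phi>] gauss_ext_Fract[OF is_gauss_ext_gauss_place] by simp
  next
    case False
    then show ?thesis
      using place_notin[OF P subfield_Rxy_R] place_notin[OF G subfield_Rxy_R]
        place_0[OF P subfield_Rxy_R] place_0[OF G subfield_Rxy_R] by (cases "B \<in> Rxy R") auto
  qed
qed

lemma xi_y_eq: "xi_y R \<xi> = gauss_place"
  unfolding xi_y_def using is_gauss_ext_gauss_place gauss_ext_unique by blast

end


section \<open>Separating two real places\<close>

lemma real_place_of_int_divide:
  fixes \<phi> :: "'a::field \<Rightarrow> real option"
  assumes "is_place K \<phi>" "subfield K" "n \<noteq> 0"
  shows "\<phi> (of_int m / of_int n) = Some (of_int m / of_int n)"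
  using place_divide[OF assms(1,2) subfield_of_int[OF assms(2)] subfield_of_int[OF assms(2)]
      place_of_int[OF assms(1,2)] place_of_int[OF assms(1,2)]] assms(3) by simp

lemma exists_int_quotient_between:
  fixes a b :: real assumes "a < b"
  obtains m n :: int where "n \<noteq> 0" "a < of_int m / of_int n" "of_int m / of_int n < b"
proof -
  obtain q where q: "q \<in> \<rat>" "a < q" "q < b" using Rats_dense_in_real[OF assms] by blast
  then obtain m n :: int where "n > 0" "q = of_int m / of_int n" by (auto elim!: Rats_cases')
  then have "n \<noteq> 0" "a < of_int m / of_int n" "of_int m / of_int n < b" using q by auto
  then show ?thesis by (rule that)
qed

context
  fixes K :: "'a::field set" and \<eta> \<theta> :: "'a \<Rightarrow> real option"
  assumes S: "subfield K" and P1: "is_place K \<eta>" and P2: "is_place K \<theta>"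
begin

lemma separate_finite_values:
  assumes B: "B \<in> K" and w: "\<eta> B = Some w" and v: "\<theta> B = Some v" and wv: "v < w"
  shows "\<exists>D\<in>K. (\<exists>a>0. \<eta> D = Some a) \<and> (\<exists>a>0. \<theta> (- D) = Some a)"
proof -
  obtain m n :: int where n: "n \<noteq> 0" and q: "v < of_int m / of_int n" "of_int m / of_int n < w"
    using exists_int_quotient_between[OF wv] .
  define c where "c = (of_int m / of_int n :: 'a)"
  have cK: "c \<in> K" unfolding c_def using S by (intro subfield_divide subfield_of_int)
  have c: "\<eta> c = Some (of_int m / of_int n)" "\<theta> c = Some (of_int m / of_int n)"
    unfolding c_def using real_place_of_int_divide[OF P1 S n] real_place_of_int_divide[OF P2 S n] by auto
  have "\<eta> (B - c) = Some (w - of_int m / of_int n)" using place_diff[OF P1 S B cK w c(1)] .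
  moreover have "\<theta> (- (B - c)) = Some (- (v - of_int m / of_int n))"
    using place_uminus[OF P2 S subfield_diff[OF S B cK] place_diff[OF P2 S B cK v c(2)]] .
  ultimately show ?thesis using q subfield_diff[OF S B cK] by (intro bexI[of _ "B - c"]) auto
qed

text \<open>If \<eta>(B) = w is finite and \<theta>(B) = \<infinity>, then \<open>1 / (1 + B\<^sup>2) - c\<close> with a rational
  \<open>0 < c < 1 / (1 + w\<^sup>2)\<close> separates.\<close>

lemma separate_finite_infinite:
  assumes B: "B \<in> K" and w: "\<eta> B = Some w" and v: "\<theta> B = None"
  shows "\<exists>D\<in>K. (\<exists>a>0. \<eta> D = Some a) \<and> (\<exists>a>0. \<theta> (- D) = Some a)"
proof -
  have pos: "inverse (1 + w * w) > 0" by (simp add: add_pos_nonneg)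
  obtain m n :: int where n: "n \<noteq> 0" and q: "(0::real) < of_int m / of_int n" "of_int m / of_int n < inverse (1 + w * w)"
    using exists_int_quotient_between[OF pos] .
  define c where "c = (of_int m / of_int n :: 'a)"
  have cK: "c \<in> K" unfolding c_def using S by (intro subfield_divide subfield_of_int)
  have c: "\<eta> c = Some (of_int m / of_int n)" "\<theta> c = Some (of_int m / of_int n)"
    unfolding c_def using real_place_of_int_divide[OF P1 S n] real_place_of_int_divide[OF P2 S n] by auto
  define F where "F = 1 + B * B"
  have FK: "F \<in> K" unfolding F_def using S B by (intro subfield_add subfield_mult subfield_1)
  have "\<eta> F = Some (1 + w * w)" unfolding F_def
    using place_add[OF P1 S subfield_1[OF S] subfield_mult[OF S B B] place_one[OF P1 S] place_mult[OF P1 S B B w w]] .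
  then have \<eta>F: "\<eta> (inverse F) = Some (inverse (1 + w * w))"
    using place_inverse[OF P1 S FK] pos by simp
  have "\<theta> F = None" unfolding F_def
    using place_add_None[OF P2 S subfield_mult[OF S B B] subfield_1[OF S] place_mult_NoneNone[OF P2 S B B v v] place_one[OF P2 S]]
    by (simp add: add.commute)
  then have \<theta>F: "\<theta> (inverse F) = Some 0" using place_inverse_None[OF P2 S FK] by simp
  have iF: "inverse F \<in> K" using subfield_inverse[OF S FK] .
  have "\<eta> (inverse F - c) = Some (inverse (1 + w * w) - of_int m / of_int n)"
    using place_diff[OF P1 S iF cK \<eta>F c(1)] .
  moreover have "\<theta> (- (inverse F - c)) = Some (of_int m / of_int n)"
    using place_uminus[OF P2 S subfield_diff[OF S iF cK] place_diff[OF P2 S iF cK \<theta>F c(2)]] by simp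
  ultimately show ?thesis using q subfield_diff[OF S iF cK] by (intro bexI[of _ "inverse F - c"]) auto
qed

end

lemma separation:
  fixes K :: "'a::field set" and \<eta> \<theta> :: "'a \<Rightarrow> real option"
  assumes S: "subfield K" and P1: "is_place K \<eta>" and P2: "is_place K \<theta>" and ne: "\<eta> B \<noteq> \<theta> B"
  shows "\<exists>D\<in>K. (\<exists>a>0. \<eta> D = Some a) \<and> (\<exists>a>0. \<theta> (- D) = Some a)"
proof -
  have B: "B \<in> K" using ne place_notin[OF P1 S] place_notin[OF P2 S] by force
  have swap: ?thesis if "\<exists>D\<in>K. (\<exists>a>0. \<theta> D = Some a) \<and> (\<exists>a>0. \<eta> (- D) = Some a)"
  proof -
    from that obtain D where "D \<in> K" "\<exists>a>0. \<theta> D = Some a" "\<exists>a>0. \<eta> (- D) = Some a" by blast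
    then show ?thesis using subfield_uminus[OF S] by (intro bexI[of _ "- D"]) auto
  qed
  show ?thesis
  proof (cases "\<eta> B")
    case None
    then obtain v where "\<theta> B = Some v" using ne by (cases "\<theta> B") auto
    then show ?thesis using swap separate_finite_infinite[OF S P2 P1 B _ None] by blast
  next
    case (Some w)
    show ?thesis
    proof (cases "\<theta> B")
      case None
      then show ?thesis using separate_finite_infinite[OF S P1 P2 B Some] by blast
    next
      case (Some v)
      then have "v < w \<or> w < v" using ne \<open>\<eta> B = Some w\<close> by auto
      then show ?thesis
        using separate_finite_values[OF S P1 P2 B \<open>\<eta> B = Some w\<close> Some]
          swap separate_finite_values[OF S P2 P1 B Some \<open>\<eta> B = Some w\<close>] by blast
    qed
  qed
qed

section \<open>The topology of \<open>M(K)\<close>\<close>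

lemma generate_topology_on_finite_Inter:
  assumes "generate_topology_on SS U" "x \<in> U"
  shows "\<exists>F. finite F \<and> F \<subseteq> SS \<and> x \<in> \<Inter>F \<and> \<Inter>F \<subseteq> U"
  using assms
proof (induction arbitrary: x rule: generate_topology_on.induct)
  case Empty
  then show ?case by simp
next
  case (Int a b)
  have xa: "x \<in> a" and xb: "x \<in> b" using Int.prems by auto
  from Int.IH(1)[OF xa] obtain F1 where 1: "finite F1" "F1 \<subseteq> SS" "x \<in> \<Inter>F1" "\<Inter>F1 \<subseteq> a"
    by (elim exE conjE)
  from Int.IH(2)[OF xb] obtain F2 where 2: "finite F2" "F2 \<subseteq> SS" "x \<in> \<Inter>F2" "\<Inter>F2 \<subseteq> b"
    by (elim exE conjE)
  have "finite (F1 \<union> F2)" "F1 \<union> F2 \<subseteq> SS" "x \<in> \<Inter>(F1 \<union> F2)" "\<Inter>(F1 \<union> F2) \<subseteq> a \<inter> b"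
    using 1 2 by auto
  then show ?case by (intro exI[of _ "F1 \<union> F2"]) (simp only: simp_thms)
next
  case (UN K)
  from UN.prems obtain k where k: "k \<in> K" "x \<in> k" by (elim UnionE)
  from UN.IH[OF k] obtain F where F: "finite F" "F \<subseteq> SS" "x \<in> \<Inter>F" "\<Inter>F \<subseteq> k"
    by (elim exE conjE)
  have "\<Inter>F \<subseteq> \<Union>K" using F(4) k(1) by auto
  then show ?case using F(1-3) by (intro exI[of _ F]) (simp only: simp_thms)
next
  case (Basis s)
  then show ?case by (intro exI[of _ "{s}"]) auto
qed

lemma openin_topology_generated_by_local:
  assumes "\<And>x. x \<in> W \<Longrightarrow> \<exists>V\<in>SS. x \<in> V \<and> V \<subseteq> W"
  shows "openin (topology_generated_by SS) W"
proof -
  have "W = \<Union>{V \<in> SS. V \<subseteq> W}" using assms by blast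
  moreover have "generate_topology_on SS (\<Union>{V \<in> SS. V \<subseteq> W})"
    by (rule generate_topology_on.UN) (auto intro: generate_topology_on.Basis)
  ultimately show ?thesis unfolding openin_topology_generated_by_iff by simp
qed

lemma H'_subset_M: "H' K b \<subseteq> M K"
  by (auto simp: H'_def)

lemma H'_1_eq_M: "subfield K \<Longrightarrow> H' K 1 = M K"
  by (auto simp: H'_def M_def place_one)

lemma Union_H'_eq_M: "subfield K \<Longrightarrow> \<Union>{H' K b |b. b \<in> K} = M K"
  using H'_subset_M[of K] H'_1_eq_M subfield_1 by blast

lemma topspace_M: "subfield K \<Longrightarrow> topspace (M_top K) = M K"
  unfolding M_top_def using Union_H'_eq_M by simp

section \<open>The places \<open>y \<mapsto> t\<close> of \<open>R(y)\<close>\<close>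

definition place_at :: "real set \<Rightarrow> real \<Rightarrow> RXY \<Rightarrow> real option" where
  "place_at R t B = (if B \<in> Ry R then eval_place t (inv_into (Fbar_Y R) embed_RY B) else None)"

context
  fixes R :: "real set" assumes S: "subfield R"
begin

lemma place_at_embed_RY: "g \<in> Fbar_Y R \<Longrightarrow> place_at R t (embed_RY g) = eval_place t g"
  using inv_into_f_f[OF inj_on_subset[OF inj_embed_RY subset_UNIV]]
  by (auto simp: place_at_def Ry_eq_image_embed_RY)

lemma place_at_place: "is_place (Ry R) (place_at R t)"
proof -
  have "is_place (embed_RY ` Fbar_Y R)
      (\<lambda>b. if b \<in> embed_RY ` Fbar_Y R then (\<lambda>g. if g \<in> Fbar_Y R then point_place (Some t) g else None)
             (inv_into (Fbar_Y R) embed_RY b) else None)"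
    by (rule place_image[OF is_place_point_place_restrict[OF S] subfield_Fbar_Y[OF S] inj_embed_RY
        embed_RY_add embed_RY_mult embed_RY_inverse embed_RY_1])
  moreover have "inv_into (Fbar_Y R) embed_RY b \<in> Fbar_Y R" if "b \<in> embed_RY ` Fbar_Y R" for b
    using that by (rule inv_into_into)
  ultimately show ?thesis
    unfolding Ry_eq_image_embed_RY place_at_def[abs_def] by (simp add: point_place_def cong: if_cong)
qed

lemma place_at_M: "place_at R t \<in> M (Ry R)"
  using place_at_place by (simp add: M_def)

lemma place_at_y: "place_at R t y_el = Some t"
  using place_at_embed_RY[OF Y_el_in_Fbar_Y[OF S]] point_place_Y[of "Some t"] by (simp add: embed_RY_Y point_place_def)

end

context gauss_setting
begin

context
  fixes \<eta> :: "RXY \<Rightarrow> real option" and t :: real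
  assumes place_eta: "is_place (Rxy R) \<eta>" and eta_xi: "\<forall>a\<in>Rx R. \<eta> a = \<xi> a" and eta_y: "\<eta> y_el = Some t"
begin

lemma place_over_xi_yscaled:
  assumes v: "reducible N e"
  shows "\<eta> (yscaled N e) = Some (poly (reduct N e) t)"
proof -
  have yR: "y_el \<in> Rxy R" using y_Ry[OF subfield_R] Ry_subset_Rxy[OF subfield_R] by auto
  have "\<eta> (yscaled N e) = Some (\<Sum>i\<le>degree N. coeff (reduct N e) i * t ^ i)"
    unfolding yscaled_def
  proof (rule place_sum[OF place_eta subfield_Rxy_R])
    fix i
    have cR: "ycoeff N i / e \<in> Rx R" using reducible_ycoeff_Rx[OF v] .
    then have cR': "ycoeff N i / e \<in> Rxy R" using Rx_subset_Rxy[OF subfield_R] by auto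
    have "\<eta> (ycoeff N i / e) = Some (coeff (reduct N e) i)" using eta_xi cR reducible_val[OF v] by simp
    then show "ycoeff N i / e * y_el ^ i \<in> Rxy R \<and> \<eta> (ycoeff N i / e * y_el ^ i) = Some (coeff (reduct N e) i * t ^ i)"
      using subfield_mult[OF subfield_Rxy_R cR' subfield_power[OF subfield_Rxy_R yR]]
        place_mult[OF place_eta subfield_Rxy_R cR' subfield_power[OF subfield_Rxy_R yR] _
          place_power[OF place_eta subfield_Rxy_R yR eta_y]] by simp
  qed
  then show ?thesis using poly_as_sum_upto[OF degree_reduct] by simp
qed


lemma place_over_xi_Fract:
  assumes D: "D \<noteq> 0" and vN: "reducible N eN" and vD: "reducible D eD"
    and pt: "poly (reduct N eN) t \<noteq> 0" "poly (reduct D eD) t \<noteq> 0"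
  shows "\<eta> (Fract N D) = map_option (\<lambda>s. s * (poly (reduct N eN) t / poly (reduct D eD) t)) (\<xi> (eN / eD))"
proof -
  have e: "eN \<in> Rx R" "eN \<noteq> 0" "eD \<in> Rx R" "eD \<noteq> 0" using reducibleD[OF vN] reducibleD[OF vD] by auto
  have dec: "Fract N D = (eN / eD) * (yscaled N eN / yscaled D eD)"
    using Fract_eq_yscaled_quotient[OF D e(2) e(4)] .
  have inS: "yscaled N eN \<in> Rxy R" "yscaled D eD \<in> Rxy R" using yscaled_Rxy vN vD by auto
  have wR: "yscaled N eN / yscaled D eD \<in> Rxy R" using subfield_divide[OF subfield_Rxy_R inS] .
  have w: "\<eta> (yscaled N eN / yscaled D eD) = Some (poly (reduct N eN) t / poly (reduct D eD) t)"
    using place_divide[OF place_eta subfield_Rxy_R inS place_over_xi_yscaled[OF vN]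
        place_over_xi_yscaled[OF vD]] pt by simp
  have q: "eN / eD \<in> Rx R" using subfield_divide[OF subfield_Rx_R e(1,3)] .
  then have qR: "eN / eD \<in> Rxy R" using Rx_subset_Rxy[OF subfield_R] by auto
  show ?thesis
  proof (cases "\<xi> (eN / eD)")
    case None
    then have "\<eta> (eN / eD) = None" using eta_xi q by simp
    from place_mult_None[OF place_eta subfield_Rxy_R qR wR this w] show ?thesis
      unfolding dec using None pt by simp
  next
    case (Some s)
    then have "\<eta> (eN / eD) = Some s" using eta_xi q by simp
    from place_mult[OF place_eta subfield_Rxy_R qR wR this w] show ?thesis
      unfolding dec using Some by simp
  qed
qed

end

text \<open>The exceptional set consists of the roots of the reductions of numerator and denominator.\<close>

lemma places_over_xi_agree_generically:
  assumes D: "D \<in> Rxy R"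
  obtains Sx EV where "finite Sx" "\<And>t \<eta>. t \<notin> Sx \<Longrightarrow> is_place (Rxy R) \<eta> \<Longrightarrow> \<forall>a\<in>Rx R. \<eta> a = \<xi> a \<Longrightarrow>
     \<eta> y_el = Some t \<Longrightarrow> \<eta> D = EV t"
proof (cases "D = 0")
  case True
  show ?thesis
  proof (rule that[of "{}" "\<lambda>_. Some 0"])
    fix \<eta> :: "RXY \<Rightarrow> real option" assume "is_place (Rxy R) \<eta>"
    then show "\<eta> D = Some 0" using place_0[OF _ subfield_Rxy_R] True by simp
  qed simp
next
  case False
  obtain N Dn eN eD where nd: "poly2_over R N" "N \<noteq> 0" "poly2_over R Dn" "Dn \<noteq> 0" "D = Fract N Dn"
    and vN: "reducible N eN" "reduct N eN \<noteq> 0" and vD: "reducible Dn eD" "reduct Dn eD \<noteq> 0"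
    using Rxy_reducible_Fract[OF D False] .
  define Sx where "Sx = {t. poly (reduct N eN * reduct Dn eD) t = 0}"
  have "finite Sx" unfolding Sx_def using vN(2) vD(2) by (intro poly_roots_finite) simp
  moreover have "\<eta> D = map_option (\<lambda>s. s * (poly (reduct N eN) t / poly (reduct Dn eD) t)) (\<xi> (eN / eD))"
    if "t \<notin> Sx" "is_place (Rxy R) \<eta>" "\<forall>a\<in>Rx R. \<eta> a = \<xi> a" "\<eta> y_el = Some t" for t \<eta>
  proof -
    have "poly (reduct N eN) t \<noteq> 0" "poly (reduct Dn eD) t \<noteq> 0" using that(1) by (auto simp: Sx_def)
    from place_over_xi_Fract[OF that(2-4) nd(4) vN(1) vD(1) this] show ?thesis unfolding nd(5) .
  qed
  ultimately show ?thesis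
    by (rule that[of Sx "\<lambda>t. map_option (\<lambda>s. s * (poly (reduct N eN) t / poly (reduct Dn eD) t)) (\<xi> (eN / eD))"])
qed

end

section \<open>The map \<open>iota\<close>\<close>

locale real_closed_setting = gauss_setting +
  assumes real_closed: "real_closed_subfield R"
    and xi_const: "\<And>r. r \<in> R \<Longrightarrow> \<xi> (constXY r) = Some r"
begin

lemma iota_eq: "iota R \<xi> \<zeta> = (\<lambda>a. case gauss_place a of None \<Rightarrow> None | Some u \<Rightarrow> point_place (\<zeta> y_el) u)"
proof
  fix a
  show "iota R \<xi> \<zeta> a = (case gauss_place a of None \<Rightarrow> None | Some u \<Rightarrow> point_place (\<zeta> y_el) u)"
    using gauss_place_in_Fbar_Y[of a]
    by (cases "gauss_place a") (simp_all add: iota_def xi_y_eq zeta_F_eq[OF subfield_Fbar])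
qed

lemma iota_place: "is_place (Rxy R) (iota R \<xi> \<zeta>)"
  unfolding iota_eq by (rule place_comp[OF is_place_gauss_place subfield_Rxy_R is_place_point_place subfield_UNIV]) simp

lemma iota_M: "iota R \<xi> \<zeta> \<in> M (Rxy R)"
  using iota_place by (simp add: M_def)

text \<open>A real place of \<open>R(y)\<close> is the identity on R, hence evaluation at its value at y.\<close>

lemma Ry_place_embed_RY:
  assumes Z: "\<zeta> \<in> M (Ry R)" and g: "g \<in> Fbar_Y R"
  shows "\<zeta> (embed_RY g) = point_place (\<zeta> y_el) g"
proof -
  have PZ: "is_place (Ry R) \<zeta>" using Z by (simp add: M_def)
  define \<zeta>' where "\<zeta>' = (\<lambda>g. if g \<in> Fbar_Y R then \<zeta> (embed_RY g) else None)"
  have hK: "\<And>a. a \<in> Fbar_Y R \<Longrightarrow> embed_RY a \<in> Ry R" unfolding Ry_eq_image_embed_RY by blast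
  have hinj: "\<And>a. a \<in> Fbar_Y R \<Longrightarrow> embed_RY a = 0 \<Longrightarrow> a = 0" using embed_RY_eq_0 by simp
  have P': "is_place (Fbar_Y R) \<zeta>'" unfolding \<zeta>'_def
    using place_pullback[OF PZ subfield_Ry_R subfield_Fbar_Y_R hK embed_RY_add embed_RY_mult embed_RY_inverse embed_RY_1 hinj] .
  have C: "\<zeta>' (cst r) = Some r" if r: "r \<in> R" for r
    using place_const[OF real_closed PZ subfield_Ry_R constXY_Ry[OF subfield_R] r] cst_in_Fbar_Y[OF subfield_R r]
    by (simp add: \<zeta>'_def embed_RY_cst)
  have Y: "\<zeta>' Y_el = \<zeta> y_el" using Y_el_in_Fbar_Y[OF subfield_R] by (simp add: \<zeta>'_def embed_RY_Y)
  interpret Fbar_Y_place R \<zeta>' using subfield_R P' C by unfold_locales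
  have "\<zeta>' g = (if g \<in> Fbar_Y R then point_place (\<zeta>' Y_el) g else None)" by (rule place_eq_point_place)
  then show ?thesis using g Y by (simp add: \<zeta>'_def)
qed

lemma H'_embed_RY:
  "g \<in> Fbar_Y R \<Longrightarrow> H' (Ry R) (embed_RY g) = {\<zeta> \<in> M (Ry R). \<exists>v>0. point_place (\<zeta> y_el) g = Some v}"
  using Ry_place_embed_RY by (auto simp: H'_def)

lemma gauss_place_ypoly: "poly_over R p \<Longrightarrow> gauss_place (Fract (ypoly p) 1) = Some (Fract p 1)"
proof -
  assume p: "poly_over R p"
  have "Fract (ypoly p) 1 = (\<Sum>i\<le>degree p. constXY (coeff p i) * y_el ^ i)"
    using Fract_poly_expand[of "ypoly p" "degree p"] degree_map_poly[of "\<lambda>c. [:c:]" p]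
    by (simp add: coeff_ypoly constXY_def y_el_def)
  also have "gauss_place \<dots> = Some (\<Sum>i\<le>degree p. cst (coeff p i) * Y_el ^ i)"
    using gauss_ext_sum[OF is_gauss_ext_gauss_place, of "degree p" "\<lambda>i. constXY (coeff p i)"]
      p xi_const constXY_Rx[OF subfield_R] by (simp add: poly_over_def)
  also have "\<dots> = Some (Fract p 1)" using Fract_Y_expand[of p "degree p"] by simp
  finally show ?thesis .
qed

lemma gauss_place_embed_RY: assumes g: "g \<in> Fbar_Y R" shows "gauss_place (embed_RY g) = Some g"
proof -
  obtain p q where pq: "poly_over R p" "poly_over R q" "q \<noteq> 0" "g = Fract p q" using g unfolding Fbar_Y_iff by blast
  have e: "embed_RY g = Fract (ypoly p) 1 / Fract (ypoly q) 1" using pq(3,4) by (simp add: embed_RY_Fract)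
  have inR: "Fract (ypoly p) 1 \<in> Rxy R" "Fract (ypoly q) 1 \<in> Rxy R"
    using Rxy_I[OF subfield_R poly2_over_ypoly[OF subfield_R] poly2_over_1[OF subfield_R]] pq by auto
  have "gauss_place (embed_RY g) = Some (Fract p 1 / Fract q 1)"
    unfolding e by (rule place_divide[OF is_place_gauss_place subfield_Rxy_R inR gauss_place_ypoly[OF pq(1)]
          gauss_place_ypoly[OF pq(2)] Fract_1_nonzero[OF pq(3)]])
  then show ?thesis using pq(3,4) by simp
qed

lemma iota_Ry: assumes Z: "\<zeta> \<in> M (Ry R)" and a: "a \<in> Ry R" shows "iota R \<xi> \<zeta> a = \<zeta> a"
proof -
  obtain g where g: "g \<in> Fbar_Y R" "a = embed_RY g" using a unfolding Ry_eq_image_embed_RY by blast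
  show ?thesis unfolding iota_eq g(2) using gauss_place_embed_RY[OF g(1)] Ry_place_embed_RY[OF Z g(1)] by simp
qed

lemma iota_Rx: "a \<in> Rx R \<Longrightarrow> iota R \<xi> \<zeta> a = \<xi> a"
  unfolding iota_eq using gauss_ext_Rx[OF is_gauss_ext_gauss_place] by (cases "\<xi> a") (simp_all add: point_place_cst)

lemma iota_inj: "inj_on (iota R \<xi>) (M (Ry R))"
proof (rule inj_onI)
  fix \<zeta>1 \<zeta>2 assume Z: "\<zeta>1 \<in> M (Ry R)" "\<zeta>2 \<in> M (Ry R)" and eq: "iota R \<xi> \<zeta>1 = iota R \<xi> \<zeta>2"
  have P: "is_place (Ry R) \<zeta>1" "is_place (Ry R) \<zeta>2" using Z by (auto simp: M_def)
  show "\<zeta>1 = \<zeta>2"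
  proof
    fix a show "\<zeta>1 a = \<zeta>2 a"
      using iota_Ry[OF Z(1)] iota_Ry[OF Z(2)] eq place_notin[OF P(1) subfield_Ry_R] place_notin[OF P(2) subfield_Ry_R]
      by (cases "a \<in> Ry R") auto
  qed
qed

lemma H'_nhd_of_y_value:
  assumes Z0: "\<zeta>0 \<in> M (Ry R)" and T: "ext_nhd (\<zeta>0 y_el) T"
  shows "\<exists>h\<in>Ry R. \<zeta>0 \<in> H' (Ry R) h \<and> (\<forall>\<zeta>\<in>H' (Ry R) h. \<zeta> y_el = \<zeta>0 y_el \<or> (\<exists>t\<in>T. \<zeta> y_el = Some t))"
proof (cases "\<zeta>0 y_el")
  case (Some a)
  then obtain d where d: "d > 0" "\<forall>t. \<bar>t - a\<bar> < d \<longrightarrow> t \<in> T" using T by (auto simp: ext_nhd_def)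
  obtain g where g: "g \<in> Fbar_Y R" "\<exists>v>0. point_place (Some a) g = Some v"
    and near: "\<And>ob v. point_place ob g = Some v \<Longrightarrow> v > 0 \<Longrightarrow> \<exists>t. ob = Some t \<and> \<bar>t - a\<bar> < d"
    using positive_bump_finite[OF subfield_R d(1)] by blast
  have "embed_RY g \<in> Ry R" using g(1) unfolding Ry_eq_image_embed_RY by blast
  moreover have "\<zeta>0 \<in> H' (Ry R) (embed_RY g)" using Z0 Some g by (simp add: H'_embed_RY)
  moreover have "\<exists>t\<in>T. \<zeta> y_el = Some t" if z: "\<zeta> \<in> H' (Ry R) (embed_RY g)" for \<zeta>
  proof -
    obtain v where "point_place (\<zeta> y_el) g = Some v" "v > 0" using z by (auto simp: H'_embed_RY[OF g(1)])
    then obtain t where "\<zeta> y_el = Some t" "\<bar>t - a\<bar> < d" using near by blast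
    then show ?thesis using d(2) by blast
  qed
  ultimately show ?thesis by blast
next
  case None
  then obtain Mb where Mb: "\<forall>t. Mb < \<bar>t\<bar> \<longrightarrow> t \<in> T" using T by (auto simp: ext_nhd_def)
  obtain g where g: "g \<in> Fbar_Y R" "point_place None g = Some 1"
    and far: "\<And>t v. point_place (Some t) g = Some v \<Longrightarrow> v > 0 \<Longrightarrow> Mb < \<bar>t\<bar>"
    using positive_bump_infinity[OF subfield_R] by blast
  have "embed_RY g \<in> Ry R" using g(1) unfolding Ry_eq_image_embed_RY by blast
  moreover have "\<zeta>0 \<in> H' (Ry R) (embed_RY g)" using Z0 None g by (simp add: H'_embed_RY)
  moreover have "\<zeta> y_el = \<zeta>0 y_el \<or> (\<exists>t\<in>T. \<zeta> y_el = Some t)" if "\<zeta> \<in> H' (Ry R) (embed_RY g)" for \<zeta>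
    using that far Mb None by (cases "\<zeta> y_el") (auto simp: H'_embed_RY[OF g(1)])
  ultimately show ?thesis by blast
qed

lemma iota_positive_nhd:
  assumes Z0: "\<zeta>0 \<in> M (Ry R)" and v: "iota R \<xi> \<zeta>0 b = Some v" "v > 0"
  shows "\<exists>h\<in>Ry R. \<zeta>0 \<in> H' (Ry R) h \<and> (\<forall>\<zeta>\<in>H' (Ry R) h. \<exists>w>0. iota R \<xi> \<zeta> b = Some w)"
proof -
  obtain g where g: "gauss_place b = Some g" using v(1) unfolding iota_eq by (cases "gauss_place b") auto
  have iv: "iota R \<xi> \<zeta> b = point_place (\<zeta> y_el) g" for \<zeta> using g unfolding iota_eq by simp
  have pv: "point_place (\<zeta>0 y_el) g = Some v" using iv v(1) by simp
  obtain h where h: "h \<in> Ry R" "\<zeta>0 \<in> H' (Ry R) h"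
    and near: "\<forall>\<zeta>\<in>H' (Ry R) h. \<zeta> y_el = \<zeta>0 y_el \<or> (\<exists>t\<in>{t. \<exists>w>0. eval_place t g = Some w}. \<zeta> y_el = Some t)"
    using H'_nhd_of_y_value[OF Z0 point_place_positive_nhd[OF pv v(2)]] by blast
  have "\<exists>w>0. iota R \<xi> \<zeta> b = Some w" if z: "\<zeta> \<in> H' (Ry R) h" for \<zeta>
  proof (cases "\<zeta> y_el = \<zeta>0 y_el")
    case True
    then show ?thesis using iv pv v(2) by simp
  next
    case False
    then obtain t w where "\<zeta> y_el = Some t" "w > 0" "eval_place t g = Some w" using near z by blast
    then show ?thesis using iv by (simp add: point_place_def)
  qed
  then show ?thesis using h by blast
qed

lemma iota_cont: "continuous_map (M_top (Ry R)) (M_top (Rxy R)) (iota R \<xi>)"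
  unfolding M_top_def[of "Rxy R"]
proof (rule continuous_on_generated_topo)
  show "iota R \<xi> ` topspace (M_top (Ry R)) \<subseteq> \<Union>{H' (Rxy R) b |b. b \<in> Rxy R}"
    unfolding topspace_M[OF subfield_Ry_R] Union_H'_eq_M[OF subfield_Rxy_R] using iota_M by blast
next
  fix U assume "U \<in> {H' (Rxy R) b |b. b \<in> Rxy R}"
  then obtain b where b: "U = H' (Rxy R) b" by blast
  have "\<exists>V\<in>{H' (Ry R) h |h. h \<in> Ry R}. \<zeta>0 \<in> V \<and> V \<subseteq> iota R \<xi> -` U \<inter> M (Ry R)"
    if z: "\<zeta>0 \<in> iota R \<xi> -` U \<inter> M (Ry R)" for \<zeta>0
  proof -
    obtain v where "iota R \<xi> \<zeta>0 b = Some v" "v > 0" using z unfolding b H'_def by auto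
    then obtain h where h: "h \<in> Ry R" "\<zeta>0 \<in> H' (Ry R) h" "\<forall>\<zeta>\<in>H' (Ry R) h. \<exists>w>0. iota R \<xi> \<zeta> b = Some w"
      using iota_positive_nhd z by blast
    have "H' (Ry R) h \<subseteq> iota R \<xi> -` U \<inter> M (Ry R)"
    proof
      fix \<zeta> assume "\<zeta> \<in> H' (Ry R) h"
      then have "\<zeta> \<in> M (Ry R)" "\<exists>w>0. iota R \<xi> \<zeta> b = Some w" using h(3) H'_subset_M by blast+
      then show "\<zeta> \<in> iota R \<xi> -` U \<inter> M (Ry R)" unfolding b H'_def using iota_M by auto
    qed
    then show ?thesis using h(1,2) by blast
  qed
  then show "openin (M_top (Ry R)) (iota R \<xi> -` U \<inter> topspace (M_top (Ry R)))"
    unfolding topspace_M[OF subfield_Ry_R] unfolding M_top_def by (rule openin_topology_generated_by_local)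
qed

lemma nhd_contains_place_at:
  assumes U: "openin (M_top (Ry R)) U" and Z0: "\<zeta>0 \<in> U"
  shows "\<exists>T. ext_nhd (\<zeta>0 y_el) T \<and> (\<forall>t\<in>T. place_at R t \<in> U)"
proof -
  have "generate_topology_on {H' (Ry R) h |h. h \<in> Ry R} U"
    using U unfolding M_top_def openin_topology_generated_by_iff .
  from generate_topology_on_finite_Inter[OF this Z0] obtain F
    where F: "finite F" "F \<subseteq> {H' (Ry R) h |h. h \<in> Ry R}" "\<zeta>0 \<in> \<Inter>F" "\<Inter>F \<subseteq> U" by blast
  have "\<zeta>0 \<in> M (Ry R)" using U Z0 openin_subset topspace_M[OF subfield_Ry_R] by blast
  have "\<exists>T. ext_nhd (\<zeta>0 y_el) T \<and> (\<forall>t\<in>T. place_at R t \<in> s)" if s: "s \<in> F" for s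
  proof -
    obtain g where g: "g \<in> Fbar_Y R" "s = H' (Ry R) (embed_RY g)"
      using F(2) s unfolding Ry_eq_image_embed_RY by blast
    then obtain v where v: "point_place (\<zeta>0 y_el) g = Some v" "v > 0"
      using F(3) s by (auto simp: H'_embed_RY)
    have "place_at R t \<in> s" if "\<exists>w>0. eval_place t g = Some w" for t
      using that g place_at_M[OF subfield_R] place_at_y[OF subfield_R] by (simp add: H'_embed_RY point_place_def)
    then show ?thesis using point_place_positive_nhd[OF v] by blast
  qed
  from ext_nhd_Inter[OF F(1) this] show ?thesis using F(4) by blast
qed

lemma iota_unique:
  assumes img: "\<iota> ` M (Ry R) \<subseteq> M (Rxy R)" and gm: "good_map R \<xi> \<iota>" and Z0: "\<zeta>0 \<in> M (Ry R)"
  shows "\<iota> \<zeta>0 = iota R \<xi> \<zeta>0"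
proof (rule ccontr)
  assume ne: "\<iota> \<zeta>0 \<noteq> iota R \<xi> \<zeta>0"
  have cont: "continuous_map (M_top (Ry R)) (M_top (Rxy R)) \<iota>"
    and compat: "\<forall>\<zeta>\<in>M (Ry R). \<forall>a\<in>Ry R. \<iota> \<zeta> a = \<zeta> a"
    and over_xi: "\<forall>\<zeta>\<in>M (Ry R). \<forall>a\<in>Rx R. \<iota> \<zeta> a = \<xi> a" using gm unfolding good_map_def by auto
  have P\<iota>: "is_place (Rxy R) (\<iota> \<zeta>)" if "\<zeta> \<in> M (Ry R)" for \<zeta> using img that by (auto simp: M_def)
  obtain B where "\<iota> \<zeta>0 B \<noteq> iota R \<xi> \<zeta>0 B" using ne by (meson ext)
  from separation[OF subfield_Rxy_R P\<iota>[OF Z0] iota_place this] obtain D where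
    D: "D \<in> Rxy R" "\<exists>a>0. \<iota> \<zeta>0 D = Some a" "\<exists>a>0. iota R \<xi> \<zeta>0 (- D) = Some a" by blast
  define U where "U = {\<zeta> \<in> topspace (M_top (Ry R)). \<iota> \<zeta> \<in> H' (Rxy R) D}
      \<inter> {\<zeta> \<in> topspace (M_top (Ry R)). iota R \<xi> \<zeta> \<in> H' (Rxy R) (- D)}"
  have "openin (M_top (Rxy R)) (H' (Rxy R) D)" "openin (M_top (Rxy R)) (H' (Rxy R) (- D))"
    unfolding M_top_def using D(1) subfield_uminus[OF subfield_Rxy_R D(1)]
    by (auto intro: topology_generated_by_Basis)
  then have "openin (M_top (Ry R)) U"
    unfolding U_def by (intro openin_Int openin_continuous_map_preimage[OF cont] openin_continuous_map_preimage[OF iota_cont])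
  moreover have "\<zeta>0 \<in> U"
    using Z0 P\<iota>[OF Z0] iota_M D(2,3) unfolding U_def topspace_M[OF subfield_Ry_R] H'_def by (auto simp: M_def)
  ultimately obtain T where T: "ext_nhd (\<zeta>0 y_el) T" "\<forall>t\<in>T. place_at R t \<in> U"
    using nhd_contains_place_at by blast
  obtain Sx EV where Sx: "finite Sx" and EV: "\<And>t \<eta>. t \<notin> Sx \<Longrightarrow> is_place (Rxy R) \<eta> \<Longrightarrow>
      \<forall>a\<in>Rx R. \<eta> a = \<xi> a \<Longrightarrow> \<eta> y_el = Some t \<Longrightarrow> \<eta> D = EV t"
    using places_over_xi_agree_generically[OF D(1)] by blast
  obtain t where t: "t \<in> T" "t \<notin> Sx" using ext_nhd_avoid[OF T(1) Sx] by blast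
  note Zt = place_at_M[OF subfield_R, of t]
  have "\<iota> (place_at R t) D = EV t"
    using EV[OF t(2) P\<iota>[OF Zt]] over_xi compat Zt y_Ry[OF subfield_R] place_at_y[OF subfield_R] by simp
  moreover have "iota R \<xi> (place_at R t) D = EV t"
    using EV[OF t(2) iota_place] iota_Rx iota_Ry[OF Zt y_Ry[OF subfield_R]] place_at_y[OF subfield_R] by simp
  moreover obtain a1 where "\<iota> (place_at R t) D = Some a1" "a1 > 0"
    using T(2) t(1) unfolding U_def H'_def by auto
  moreover obtain a2 where "iota R \<xi> (place_at R t) (- D) = Some a2" "a2 > 0"
    using T(2) t(1) unfolding U_def H'_def by auto
  ultimately show False using place_uminus[OF iota_place subfield_Rxy_R D(1), of "place_at R t" a1] by simp
qed

end


text \<open>Every subfield of \<real> is archimedean.\<close>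

theorem theorem6p3:
  fixes R :: "real set" and \<xi> :: "RXY \<Rightarrow> real option"
  assumes "real_closed_subfield R" and "archimedean_subfield R"
    and "\<xi> \<in> M (Rx R)"
    and "\<forall>r \<in> R. \<xi> (Fract [:[:r:]:] 1) = Some r"
  shows "iota R \<xi> ` M (Ry R) \<subseteq> M (Rxy R) \<and> good_map R \<xi> (iota R \<xi>) \<and>
         (\<forall>\<iota>. \<iota> ` M (Ry R) \<subseteq> M (Rxy R) \<and> good_map R \<xi> \<iota> \<longrightarrow>
               (\<forall>\<zeta> \<in> M (Ry R). \<iota> \<zeta> = iota R \<xi> \<zeta>))"
proof -
  interpret real_closed_setting R \<xi>
    using assms(1,3,4) by unfold_locales
      (simp_all add: M_def constXY_def real_closed_imp_subfield)
  have "good_map R \<xi> (iota R \<xi>)"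
    unfolding good_map_def using iota_cont iota_inj iota_Ry iota_Rx by blast
  then show ?thesis using iota_M iota_unique by blast
qed

end
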